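(* Assume $f$ is in Case 4 and let $r>0$ be sufficiently small. If $d\ge2$ or $T_k<\delta<T_{k-1}$, then $G_z=\alpha G_p$ on $A_f$. If $(n_1,m_1)\neq(0,\delta)$, then $G_f^{\alpha}=\alpha G_p$ on $A_0$.
   Context: Let $f(z,w)=(p(z),q(z,w))$ be a holomorphic skew product defined on $\mathbb{C}^2$ or on $\{|z|<R\}\times\mathbb{C}$, where $R$ is so large that the attracting basin $A_p$ of $p$ at $0$ is relatively compact in $\{|z|<R\}$. Assume $p(z)=az^{\delta}+O(z^{\delta+1})$, $a\neq0$, $\delta\ge2$, and $q(z,w)=\sum_{i,j\ge0}b_{ij}z^iw^j$ with $b_{00}=b_{01}=0$. The Newton polygon $N(q)$ is the convex hull of $\bigcup_{b_{ij}\ne0}\{(x,y):x\ge i,\ y\ge j\}$, with vertices $(n_1,m_1),\dots,(n_s,m_s)$, $n_1<\dots<n_s$, $m_1>\dots>m_s$. For $1\le k\le s-1$, $T_k$ is the $y$-intercept of the line through $(n_k,m_k)$ and $(n_{k+1},m_{k+1})$. Case 4 means $s>2$ and $T_k\le\delta\le T_{k-1}$ for some $2\le k\le s-1$; set $(\gamma,d)=(n_k,m_k)$ (so $\delta>d$), $\alpha=\gamma/(\delta-d)$, $l_1=(n_k-n_{k-1})/(m_{k-1}-m_k)$, $l_1+l_2=(n_{k+1}-n_k)/(m_k-m_{k+1})$. Let $U=\{|z|^{l_1+l_2}<r^{l_2}|w|,\ |w|<r|z|^{l_1}\}$ and $A_f=\bigcup_{n\ge0}f^{-n}(U)$; $A_0$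 is the attracting basin of the origin. With $(z_n,w_n)=f^n(z,w)$: $G_p(z)=\lim_n\delta^{-n}\log|p^n(z)|$, $G_z(w)=\lim_n\delta^{-n}\log|w_n|$, $G_f^{\alpha}(z,w)=\lim_n\delta^{-n}\log\max\{|z_n|^{\alpha},|w_n|\}$; an equality includes existence of the limit. *)

theory Defs
  imports "HOL-Analysis.Analysis"
begin

definition skew :: "(complex \<Rightarrow> complex) \<Rightarrow> (complex \<Rightarrow> complex \<Rightarrow> complex)
    \<Rightarrow> complex \<times> complex \<Rightarrow> complex \<times> complex" where
  "skew p q = (\<lambda>(z, w). (p z, q z w))"

text \<open>Newton polygon of q with Taylor coefficients b i j (of z^i w^j).\<close>
definition newton_polygon :: "(nat \<Rightarrow> nat \<Rightarrow> complex) \<Rightarrow> (real \<times> real) set" where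
  "newton_polygon b = convex hull
     (\<Union>{{(x, y). real i \<le> x \<and> real j \<le> y} | i j. b i j \<noteq> 0})"

text \<open>y-intercept T_k of the line through (n k, m k) and (n (k+1), m (k+1)).\<close>
definition intercept :: "(nat \<Rightarrow> nat) \<Rightarrow> (nat \<Rightarrow> nat) \<Rightarrow> nat \<Rightarrow> real" where
  "intercept n m k = real (m k) + real (n k) * (real (m k) - real (m (Suc k)))
                       / (real (n (Suc k)) - real (n k))"

definition basin_p :: "complex set \<Rightarrow> (complex \<Rightarrow> complex) \<Rightarrow> complex set" where
  "basin_p Dz p = {z \<in> Dz. (\<forall>j. (p ^^ j) z \<in> Dz) \<and> (\<lambda>j. (p ^^ j) z) \<longlonglongrightarrow> 0}"

definition basin0 :: "complex set \<Rightarrow> (complex \<times> complex \<Rightarrow> complex \<times> complex)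
    \<Rightarrow> (complex \<times> complex) set" where
  "basin0 Dz f = {x. (\<forall>j. fst ((f ^^ j) x) \<in> Dz) \<and> (\<lambda>j. (f ^^ j) x) \<longlonglongrightarrow> 0}"

definition Uset :: "real \<Rightarrow> real \<Rightarrow> real \<Rightarrow> (complex \<times> complex) set" where
  "Uset l1 l2 r = {(z, w). cmod z powr (l1 + l2) < r powr l2 * cmod w \<and> cmod w < r * cmod z powr l1}"

definition Af :: "complex set \<Rightarrow> (complex \<times> complex \<Rightarrow> complex \<times> complex)
    \<Rightarrow> (complex \<times> complex) set \<Rightarrow> (complex \<times> complex) set" where
  "Af Dz f U = {x. \<exists>n. (\<forall>j\<le>n. fst ((f ^^ j) x) \<in> Dz) \<and> (f ^^ n) x \<in> U}"

definition eln :: "real \<Rightarrow> ereal" where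
  "eln x = (if x \<le> 0 then -\<infinity> else ereal (ln x))"

text \<open>The sequence delta^{-n} log (u n), whose limit defines the Green functions.\<close>
definition green_seq :: "nat \<Rightarrow> (nat \<Rightarrow> real) \<Rightarrow> nat \<Rightarrow> ereal" where
  "green_seq \<delta> u = (\<lambda>n. ereal (1 / real \<delta> ^ n) * eln (u n))"

end

theory Submission
  imports Defs
begin

text \<open>Let \<open>(\<gamma>, d)\<close> be the vertex \<open>(n\<^sub>k, m\<^sub>k)\<close> of the Newton polygon. On the wedge \<open>U\<close> the
  support of \<open>q\<close> lies beyond the two edges through this vertex, so \<open>q\<close> is comparable to
  \<open>z\<^sup>\<gamma> w\<^sup>d\<close>; for small \<open>r\<close> this makes \<open>U\<close> forward invariant, and in logarithmic coordinates
  an orbit satisfies \<open>X' = \<delta> X + O(1)\<close>, \<open>Y' = \<gamma> X + d Y + O(1)\<close>. Dividing by \<open>\<delta>\<^sup>n\<close> and using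
  \<open>d < \<delta>\<close> gives \<open>G\<^sub>z = \<gamma> / (\<delta> - d) \<cdot> G\<^sub>p = \<alpha> G\<^sub>p\<close>.
  Near the origin the Newton polygon bounds \<open>|q|\<close> by \<open>K (|z| M\<^bsup>\<delta> - 1/\<alpha>\<^esup> + M\<^bsup>\<delta> + 1\<^esup>)\<close> with
  \<open>M = max (|z|\<^sup>\<alpha>, |w|)\<close>. Along an orbit in the basin this forces \<open>ln M\<^sub>n \<le> -\<delta>\<^sup>n\<close>, and then
  the defect \<open>ln M\<^sub>n - \<alpha> ln |z\<^sub>n|\<close> satisfies a contracting recursion, so it is \<open>o(\<delta>\<^sup>n)\<close> and
  \<open>G\<^sub>f\<^sup>\<alpha> = \<alpha> G\<^sub>p\<close> (both are \<open>-\<infinity>\<close> on the line \<open>z = 0\<close>).\<close>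

section \<open>Geometry of the Newton polygon\<close>

lemma newton_polygon_halfspace:
  assumes "c1 \<ge> 0" "c2 \<ge> 0"
    and support: "\<And>i j. b i j \<noteq> 0 \<Longrightarrow> \<mu> \<le> c1 * real i + c2 * real j"
    and "(x, y) \<in> newton_polygon b"
  shows "\<mu> \<le> c1 * x + c2 * y"
proof -
  define H where "H = {v :: real \<times> real. \<mu> \<le> c1 * fst v + c2 * snd v}"
  have "convex H"
    unfolding H_def convex_def
  proof clarify
    fix x1 y1 x2 y2 u v :: real
    assume h: "\<mu> \<le> c1 * fst (x1, y1) + c2 * snd (x1, y1)" "\<mu> \<le> c1 * fst (x2, y2) + c2 * snd (x2, y2)"
      "0 \<le> u" "0 \<le> v" "u + v = 1"
    have "u * \<mu> \<le> u * (c1 * x1 + c2 * y1)" "v * \<mu> \<le> v * (c1 * x2 + c2 * y2)"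
      using h by (auto intro: mult_left_mono)
    then have "(u + v) * \<mu> \<le> u * (c1 * x1 + c2 * y1) + v * (c1 * x2 + c2 * y2)"
      by (simp add: distrib_right)
    then show "\<mu> \<le> c1 * fst (u *\<^sub>R (x1, y1) + v *\<^sub>R (x2, y2)) + c2 * snd (u *\<^sub>R (x1, y1) + v *\<^sub>R (x2, y2))"
      using h(5) by (simp add: algebra_simps)
  qed
  moreover have "(\<Union>{{(x, y). real i \<le> x \<and> real j \<le> y} | i j. b i j \<noteq> 0}) \<subseteq> H"
  proof
    fix v assume "v \<in> \<Union>{{(x, y). real i \<le> x \<and> real j \<le> y} | i j. b i j \<noteq> 0}"
    then obtain i j where "b i j \<noteq> 0" "real i \<le> fst v" "real j \<le> snd v" by auto
    moreover have "c1 * real i \<le> c1 * fst v" "c2 * real j \<le> c2 * snd v"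
      using assms(1,2) calculation(2,3) by (auto intro: mult_left_mono)
    ultimately show "v \<in> H" using support unfolding H_def by force
  qed
  ultimately have "newton_polygon b \<subseteq> H"
    unfolding newton_polygon_def by (rule hull_minimal[rotated])
  with assms(4) show ?thesis unfolding H_def by auto
qed

lemma newton_polygon_translate:
  assumes "v \<in> newton_polygon b" "t1 \<ge> 0" "t2 \<ge> 0"
  shows "(t1, t2) + v \<in> newton_polygon b"
proof -
  define U where "U = (\<Union>{{(x, y). real i \<le> x \<and> real j \<le> y} | i j. b i j \<noteq> 0})"
  have "(+) (t1, t2) ` U \<subseteq> U"
  proof
    fix v assume "v \<in> (+) (t1, t2) ` U"
    then obtain x y where "(x, y) \<in> U" and v: "v = (t1 + x, t2 + y)" by auto
    then obtain i j where "b i j \<noteq> 0" "real i \<le> x" "real j \<le> y" unfolding U_def by auto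
    then show "v \<in> U" unfolding U_def v using assms(2,3)
      by (auto intro!: exI[of _ "{(x, y). real i \<le> x \<and> real j \<le> y}"])
  qed
  then have "(+) (t1, t2) ` (convex hull U) \<subseteq> convex hull U"
    by (metis convex_hull_translation hull_mono)
  with assms(1) show ?thesis unfolding newton_polygon_def U_def[symmetric] by auto
qed

lemma newton_polygon_support_point:
  "b i j \<noteq> 0 \<Longrightarrow> (real i, real j) \<in> newton_polygon b"
  unfolding newton_polygon_def by (rule hull_inc) auto

lemma extreme_point_of_newton_polygon_support:
  assumes e: "e extreme_point_of newton_polygon b"
  shows "\<exists>i j. b i j \<noteq> 0 \<and> e = (real i, real j)"
proof -
  have "e \<in> \<Union>{{(x, y). real i \<le> x \<and> real j \<le> y} | i j. b i j \<noteq> 0}"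
    using extreme_point_of_convex_hull e unfolding newton_polygon_def by blast
  then obtain i j where bij: "b i j \<noteq> 0" and le: "real i \<le> fst e" "real j \<le> snd e" by auto
  define t1 where "t1 = fst e - real i"
  define t2 where "t2 = snd e - real j"
  have t: "t1 \<ge> 0" "t2 \<ge> 0" using le t1_def t2_def by auto
  have corner: "(real i, real j) \<in> newton_polygon b"
    using newton_polygon_support_point bij by blast
  show ?thesis
  proof (cases "t1 = 0 \<and> t2 = 0")
    case True
    then show ?thesis using bij t1_def t2_def by (intro exI[of _ i] exI[of _ j]) (cases e, auto)
  next
    case False
    \<comment> \<open>otherwise e is the midpoint of two distinct points of the quadrant above the corner\<close>
    define a where "a = (t1/2, t2/2) + (real i, real j)"
    define c where "c = (3*t1/2, 3*t2/2) + (real i, real j)"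
    have "a \<in> newton_polygon b" "c \<in> newton_polygon b"
      unfolding a_def c_def using newton_polygon_translate[OF corner] t by auto
    moreover have "e \<in> open_segment a c"
      unfolding in_segment(2)
    proof (intro conjI exI[of _ "1/2"])
      show "a \<noteq> c" using False unfolding a_def c_def by auto
      show "e = (1 - 1/2) *\<^sub>R a + (1/2) *\<^sub>R c" unfolding a_def c_def t1_def t2_def
        by (cases e) (auto simp: field_simps)
    qed auto
    ultimately show ?thesis using e unfolding extreme_point_of_def by blast
  qed
qed

lemma extreme_point_of_newton_polygon_two_weights:
  assumes E: "(x0, y0) \<in> newton_polygon b"
    and c: "c1 \<ge> 0" "c2 \<ge> 0" "c1' \<ge> 0" "c2' \<ge> 0" "c1 * c2' \<noteq> c2 * c1'"
    and min1: "\<And>i j. b i j \<noteq> 0 \<Longrightarrow> c1 * x0 + c2 * y0 \<le> c1 * real i + c2 * real j"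
    and min2: "\<And>i j. b i j \<noteq> 0 \<Longrightarrow> c1' * x0 + c2' * y0 \<le> c1' * real i + c2' * real j"
  shows "(x0, y0) extreme_point_of newton_polygon b"
proof -
  have level: "d1 * x + d2 * y = d1 * x0 + d2 * y0 \<and> d1 * x' + d2 * y' = d1 * x0 + d2 * y0"
    if "(x, y) \<in> newton_polygon b" "(x', y') \<in> newton_polygon b"
      "x0 = (1 - u) * x + u * x'" "y0 = (1 - u) * y + u * y'" "0 < u" "u < 1"
      "d1 \<ge> 0" "d2 \<ge> 0" "\<And>i j. b i j \<noteq> 0 \<Longrightarrow> d1 * x0 + d2 * y0 \<le> d1 * real i + d2 * real j"
    for x y x' y' u d1 d2
  proof -
    define F where "F = d1 * x0 + d2 * y0"
    have "F \<le> d1 * x + d2 * y" "F \<le> d1 * x' + d2 * y'"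
      unfolding F_def using newton_polygon_halfspace[of d1 d2 b] that by blast+
    then have "(1 - u) * (d1 * x + d2 * y - F) \<ge> 0" "u * (d1 * x' + d2 * y' - F) \<ge> 0"
      using that(5,6) by simp_all
    moreover have "(1 - u) * (d1 * x + d2 * y - F) + u * (d1 * x' + d2 * y' - F) = 0"
      unfolding F_def that(3,4) by (simp add: algebra_simps)
    ultimately have "(1 - u) * (d1 * x + d2 * y - F) = 0" "u * (d1 * x' + d2 * y' - F) = 0"
      by linarith+
    then show ?thesis using that(5,6) unfolding F_def by simp
  qed
  have same: "x = x0 \<and> y = y0"
    if "c1 * x + c2 * y = c1 * x0 + c2 * y0" "c1' * x + c2' * y = c1' * x0 + c2' * y0" for x y
  proof -
    have e: "c1 * (x - x0) + c2 * (y - y0) = 0" "c1' * (x - x0) + c2' * (y - y0) = 0"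
      using that by (simp_all add: algebra_simps)
    have "(c1 * c2' - c2 * c1') * (x - x0)
        = c2' * (c1 * (x - x0) + c2 * (y - y0)) - c2 * (c1' * (x - x0) + c2' * (y - y0))"
      "(c1 * c2' - c2 * c1') * (y - y0)
        = c1 * (c1' * (x - x0) + c2' * (y - y0)) - c1' * (c1 * (x - x0) + c2 * (y - y0))"
      by (simp_all add: algebra_simps)
    then have "(c1 * c2' - c2 * c1') * (x - x0) = 0" "(c1 * c2' - c2 * c1') * (y - y0) = 0"
      unfolding e by simp_all
    then show ?thesis using c(5) by simp
  qed
  show ?thesis
    unfolding extreme_point_of_def
  proof (intro conjI E ballI)
    fix a a' assume a: "a \<in> newton_polygon b" and a': "a' \<in> newton_polygon b"
    show "(x0, y0) \<notin> open_segment a a'"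
    proof
      assume "(x0, y0) \<in> open_segment a a'"
      then obtain u where ne: "a \<noteq> a'" and u: "0 < u" "u < 1"
        and E: "(x0, y0) = (1 - u) *\<^sub>R a + u *\<^sub>R a'"
        unfolding in_segment(2) by auto
      obtain x y x' y' where xy: "a = (x, y)" "a' = (x', y')" by (cases a, cases a')
      have cx: "x0 = (1 - u) * x + u * x'" "y0 = (1 - u) * y + u * y'" using E xy by auto
      have in_np: "(x, y) \<in> newton_polygon b" "(x', y') \<in> newton_polygon b" using a a' xy by auto
      have "c1 * x + c2 * y = c1 * x0 + c2 * y0 \<and> c1 * x' + c2 * y' = c1 * x0 + c2 * y0"
        by (rule level[OF in_np cx u c(1,2) min1])
      moreover have "c1' * x + c2' * y = c1' * x0 + c2' * y0 \<and> c1' * x' + c2' * y' = c1' * x0 + c2' * y0"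
        by (rule level[OF in_np cx u c(3,4) min2])
      ultimately have "x = x0 \<and> y = y0" "x' = x0 \<and> y' = y0" using same by blast+
      then show False using ne xy by simp
    qed
  qed
qed

lemma finite_gap_above:
  fixes f :: "'a \<Rightarrow> real"
  assumes "finite A"
  shows "\<exists>g>0. \<forall>x\<in>A. \<mu> < f x \<longrightarrow> \<mu> + g \<le> f x"
proof -
  define G where "G = insert 1 ((\<lambda>x. f x - \<mu>) ` {x\<in>A. \<mu> < f x})"
  have "finite G" unfolding G_def using assms by simp
  have "Min G > 0" using \<open>finite G\<close> unfolding G_def by (subst Min_gr_iff) auto
  moreover have "\<mu> + Min G \<le> f x" if "x \<in> A" "\<mu> < f x" for x
  proof -
    have "Min G \<le> f x - \<mu>" using \<open>finite G\<close> that unfolding G_def by (intro Min_le) auto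
    then show ?thesis by simp
  qed
  ultimately show ?thesis by blast
qed

lemma finite_weight_sublevel:
  fixes lam C :: real
  assumes lam: "lam > 0"
  shows "finite {x :: nat \<times> nat. real (fst x) + lam * real (snd x) \<le> C}"
proof (rule finite_subset)
  show "{x :: nat \<times> nat. real (fst x) + lam * real (snd x) \<le> C} \<subseteq> {..nat \<lceil>C\<rceil>} \<times> {..nat \<lceil>C / lam\<rceil>}"
  proof
    fix x :: "nat \<times> nat" assume "x \<in> {x. real (fst x) + lam * real (snd x) \<le> C}"
    moreover obtain i j where x: "x = (i, j)" by force
    ultimately have le: "real i + lam * real j \<le> C" by simp
    have "lam * real j \<ge> 0" using lam by simp
    then have "i \<le> nat \<lceil>C\<rceil>" using le by linarith
    moreover have "real j \<le> C / lam" using le lam by (simp add: field_simps add_increasing)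
    then have "j \<le> nat \<lceil>C / lam\<rceil>" by linarith
    ultimately show "x \<in> {..nat \<lceil>C\<rceil>} \<times> {..nat \<lceil>C / lam\<rceil>}" unfolding x by simp
  qed
qed simp

text \<open>A minimiser of \<open>i + \<lambda> j\<close> over the support which, among all minimisers, has least \<open>i\<close>
  also minimises \<open>(1 + \<epsilon>) i + \<lambda> j\<close> for small \<open>\<epsilon> > 0\<close>; two independent supporting weights
  make it a vertex.\<close>

lemma newton_polygon_weight_minimizer_extreme:
  fixes lam :: real
  assumes lam: "lam > 0" and b0: "b i0 j0 \<noteq> 0"
  shows "\<exists>i j. (real i, real j) extreme_point_of newton_polygon b
     \<and> real i + lam * real j \<le> real i0 + lam * real j0
     \<and> (real i + lam * real j = real i0 + lam * real j0 \<longrightarrow> i \<le> i0)"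
proof -
  define \<phi> where "\<phi> = (\<lambda>x::nat\<times>nat. real (fst x) + lam * real (snd x))"
  define T where "T = {x. b (fst x) (snd x) \<noteq> 0 \<and> \<phi> x \<le> \<phi> (i0, j0) + 1}"
  have "T \<subseteq> {x. \<phi> x \<le> \<phi> (i0, j0) + 1}" unfolding T_def by auto
  then have finT: "finite T" using finite_weight_sublevel[OF lam] unfolding \<phi>_def by (rule finite_subset)
  have i0T: "(i0, j0) \<in> T" unfolding T_def using b0 by auto
  define \<mu> where "\<mu> = Min (\<phi> ` T)"
  have \<mu>_le: "\<And>x. x \<in> T \<Longrightarrow> \<mu> \<le> \<phi> x" unfolding \<mu>_def using finT by auto
  have "\<mu> \<in> \<phi> ` T" unfolding \<mu>_def using finT i0T by (intro Min_in) auto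
  define T' where "T' = {x\<in>T. \<phi> x = \<mu>}"
  have finT': "finite T'" and "T' \<noteq> {}" using finT \<open>\<mu> \<in> \<phi> ` T\<close> unfolding T'_def by auto
  define ie where "ie = Min (fst ` T')"
  have "ie \<in> fst ` T'" unfolding ie_def using finT' \<open>T' \<noteq> {}\<close> by (intro Min_in) auto
  then obtain je where eT': "(ie, je) \<in> T'" by force
  have ie_le: "\<And>x. x \<in> T' \<Longrightarrow> ie \<le> fst x" unfolding ie_def using finT' by auto
  obtain g0 where "g0 > 0" and gap0: "\<And>x. x \<in> T \<Longrightarrow> \<mu> < \<phi> x \<Longrightarrow> \<mu> + g0 \<le> \<phi> x"
    using finite_gap_above[OF finT] by blast
  define g where "g = min g0 1"
  have g: "g > 0" "g \<le> 1" unfolding g_def using \<open>g0 > 0\<close> by auto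
  have gap: "\<mu> + g \<le> \<phi> x" if "x \<in> T" "\<mu> < \<phi> x" for x
    using gap0[OF that] unfolding g_def by (simp add: min_def)
  define \<epsilon> where "\<epsilon> = g / (real ie + 1)"
  have \<epsilon>: "\<epsilon> > 0" "\<epsilon> * real ie < g"
    unfolding \<epsilon>_def using g by (auto simp: field_simps)
  have \<mu>_eq: "\<mu> = real ie + lam * real je" using eT' unfolding T'_def \<phi>_def by simp
  have support: "\<mu> \<le> \<phi> (i, j) \<and> \<mu> + \<epsilon> * real ie \<le> \<phi> (i, j) + \<epsilon> * real i"
    if bij: "b i j \<noteq> 0" for i j
  proof (cases "(i, j) \<in> T")
    case True
    show ?thesis
    proof (cases "\<phi> (i, j) = \<mu>")
      case True
      then have "ie \<le> i" using ie_le[of "(i, j)"] \<open>(i, j) \<in> T\<close> unfolding T'_def by auto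
      then show ?thesis using True \<epsilon> by (simp add: mult_left_mono)
    next
      case False
      then have "\<mu> < \<phi> (i, j)" using \<mu>_le[OF \<open>(i, j) \<in> T\<close>] by simp
      then have "\<mu> + g \<le> \<phi> (i, j)" using gap \<open>(i, j) \<in> T\<close> by blast
      moreover have "\<epsilon> * real i \<ge> 0" using \<epsilon> by simp
      ultimately show ?thesis using \<mu>_le[OF \<open>(i, j) \<in> T\<close>] \<epsilon> by linarith
    qed
  next
    case False
    then have "\<phi> (i0, j0) + 1 < \<phi> (i, j)" using bij unfolding T_def by auto
    moreover have "\<epsilon> * real i \<ge> 0" using \<epsilon> by simp
    ultimately show ?thesis using \<mu>_le[OF i0T] \<epsilon> g by linarith
  qed
  have "(real ie, real je) extreme_point_of newton_polygon b"
  proof (rule extreme_point_of_newton_polygon_two_weights)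
    show "(real ie, real je) \<in> newton_polygon b"
      using eT' newton_polygon_support_point unfolding T'_def T_def by auto
    show "1 * lam \<noteq> lam * (1 + \<epsilon>)" using lam \<epsilon> by simp
    show "1 * real ie + lam * real je \<le> 1 * real i + lam * real j" if "b i j \<noteq> 0" for i j
      using support[OF that] \<mu>_eq unfolding \<phi>_def by simp
    show "(1 + \<epsilon>) * real ie + lam * real je \<le> (1 + \<epsilon>) * real i + lam * real j" if "b i j \<noteq> 0" for i j
      using support[OF that] \<mu>_eq unfolding \<phi>_def by (simp add: algebra_simps)
  qed (use lam \<epsilon> in auto)
  moreover have "real ie + lam * real je \<le> real i0 + lam * real j0"
    using \<mu>_le[OF i0T] \<mu>_eq unfolding \<phi>_def by simp
  moreover have "ie \<le> i0" if "real ie + lam * real je = real i0 + lam * real j0"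
    using ie_le[of "(i0, j0)"] i0T that \<mu>_eq unfolding T'_def \<phi>_def by auto
  ultimately show ?thesis by blast
qed

locale newton_vertices =
  fixes b :: "nat \<Rightarrow> nat \<Rightarrow> complex" and s :: nat and n m :: "nat \<Rightarrow> nat"
  assumes vertices: "{(real (n i), real (m i)) | i. i \<in> {1..s}} = {x. x extreme_point_of newton_polygon b}"
    and n_incr: "strict_mono_on {1..s} n"
    and m_decr: "\<forall>i\<in>{1..s}. \<forall>j\<in>{1..s}. i < j \<longrightarrow> m j < m i"
begin

text \<open>The edge from vertex \<open>i\<close> to vertex \<open>i + 1\<close> is a level line of \<open>x + edge_weight i * y\<close>.\<close>

definition edge_weight :: "nat \<Rightarrow> real" where
  "edge_weight i = (real (n (Suc i)) - real (n i)) / (real (m i) - real (m (Suc i)))"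

lemma vertex_extreme: "i \<in> {1..s} \<Longrightarrow> (real (n i), real (m i)) extreme_point_of newton_polygon b"
  using vertices by blast

lemma extreme_point_vertex: "e extreme_point_of newton_polygon b \<Longrightarrow> \<exists>i\<in>{1..s}. e = (real (n i), real (m i))"
  using vertices by blast

lemma vertex_in_newton_polygon: "i \<in> {1..s} \<Longrightarrow> (real (n i), real (m i)) \<in> newton_polygon b"
  using vertex_extreme unfolding extreme_point_of_def by blast

lemma vertex_coeff_nonzero: "i \<in> {1..s} \<Longrightarrow> b (n i) (m i) \<noteq> 0"
  using extreme_point_of_newton_polygon_support[OF vertex_extreme] by fastforce

lemma vertex_n_less: "i \<in> {1..s} \<Longrightarrow> j \<in> {1..s} \<Longrightarrow> i < j \<Longrightarrow> n i < n j"
  using n_incr unfolding strict_mono_on_def by blast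

lemma vertex_m_less: "i \<in> {1..s} \<Longrightarrow> j \<in> {1..s} \<Longrightarrow> i < j \<Longrightarrow> m j < m i"
  using m_decr by blast

lemma edge_weight_pos: assumes "1 \<le> i" "Suc i \<le> s" shows "edge_weight i > 0"
proof -
  have "n i < n (Suc i)" "m (Suc i) < m i" using vertex_n_less vertex_m_less assms by auto
  then show ?thesis unfolding edge_weight_def by (auto intro!: divide_pos_pos)
qed

text \<open>Otherwise vertex \<open>i + 1\<close> would lie on or above the chord joining its neighbours,
  hence in an open segment inside the polygon.\<close>

lemma edge_weight_less_Suc:
  assumes i: "1 \<le> i" "Suc (Suc i) \<le> s"
  shows "edge_weight i < edge_weight (Suc i)"
proof (rule ccontr)
  assume "\<not> edge_weight i < edge_weight (Suc i)"
  then have ge: "edge_weight (Suc i) \<le> edge_weight i" by simp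
  define dx1 where "dx1 = real (n (Suc i)) - real (n i)"
  define dy1 where "dy1 = real (m i) - real (m (Suc i))"
  define dx2 where "dx2 = real (n (Suc (Suc i))) - real (n (Suc i))"
  define dy2 where "dy2 = real (m (Suc i)) - real (m (Suc (Suc i)))"
  have pos: "dx1 > 0" "dy1 > 0" "dx2 > 0" "dy2 > 0"
    unfolding dx1_def dy1_def dx2_def dy2_def using vertex_n_less vertex_m_less i by auto
  have "dx2 / dy2 \<le> dx1 / dy1" using ge unfolding edge_weight_def dx1_def dy1_def dx2_def dy2_def by simp
  then have cross: "dx2 * dy1 \<le> dx1 * dy2" using pos by (simp add: divide_simps)
  define \<tau> where "\<tau> = dx1 / (dx1 + dx2)"
  have \<tau>: "0 < \<tau>" "\<tau> < 1" unfolding \<tau>_def using pos by auto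
  define A where "A = (real (n i), real (m i))"
  define B where "B = (real (n (Suc i)), real (m (Suc i)))"
  define C where "C = (real (n (Suc (Suc i))), real (m (Suc (Suc i))))"
  have AN: "A \<in> newton_polygon b" unfolding A_def using vertex_in_newton_polygon i by auto
  have CN: "C \<in> newton_polygon b" unfolding C_def using vertex_in_newton_polygon i by auto
  have Bext: "B extreme_point_of newton_polygon b" unfolding B_def using vertex_extreme i by auto
  define c where "c = (1 - \<tau>) *\<^sub>R A + \<tau> *\<^sub>R C"
  have cvx: "convex (newton_polygon b)" unfolding newton_polygon_def by simp
  have cN: "c \<in> newton_polygon b" unfolding c_def
    using convexD[OF cvx AN CN, of "1 - \<tau>" \<tau>] \<tau> by auto
  have cx: "fst c = real (n (Suc i))"
  proof -
    have "fst c = real (n i) + \<tau> * (dx1 + dx2)" unfolding c_def A_def C_def dx1_def dx2_def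
      by (simp add: algebra_simps)
    also have "\<tau> * (dx1 + dx2) = dx1" unfolding \<tau>_def using pos by simp
    finally show ?thesis unfolding dx1_def by simp
  qed
  have cy: "snd c = real (m i) - \<tau> * (dy1 + dy2)" unfolding c_def A_def C_def dy1_def dy2_def
    by (simp add: algebra_simps)
  have "\<tau> * (dy1 + dy2) \<ge> dy1"
  proof -
    have "dy1 * (dx1 + dx2) \<le> dx1 * (dy1 + dy2)" using cross by (simp add: algebra_simps)
    then show ?thesis unfolding \<tau>_def using pos by (simp add: field_simps)
  qed
  then have cyle: "snd c \<le> real (m (Suc i))" using cy unfolding dy1_def by simp
  define t where "t = real (m (Suc i)) - snd c"
  have t0: "t \<ge> 0" unfolding t_def using cyle by simp
  show False
  proof (cases "t = 0")
    case True
    have "B = c" using True cx unfolding t_def B_def by (cases c) auto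
    moreover have "A \<noteq> C" unfolding A_def C_def using vertex_n_less[of i "Suc (Suc i)"] i by auto
    ultimately have "B \<in> open_segment A C" unfolding in_segment(2) c_def using \<tau> by auto
    then show False using Bext AN CN unfolding extreme_point_of_def by blast
  next
    case False
    define c' where "c' = (0, 2 * t) + c"
    have c'N: "c' \<in> newton_polygon b" unfolding c'_def using newton_polygon_translate[OF cN] t0 by auto
    have "B \<in> open_segment c c'"
      unfolding in_segment(2)
    proof (intro conjI exI[of _ "1/2"])
      show "c \<noteq> c'" unfolding c'_def using False by (cases c) auto
      show "B = (1 - 1/2) *\<^sub>R c + (1/2) *\<^sub>R c'" unfolding c'_def B_def t_def using cx
        by (cases c) (auto simp: field_simps)
    qed auto
    then show False using Bext cN c'N unfolding extreme_point_of_def by blast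
  qed
qed

lemma edge_weight_mono:
  assumes "1 \<le> i" "i \<le> j" "Suc j \<le> s"
  shows "edge_weight i \<le> edge_weight j"
  using assms(2,3)
proof (induction j rule: dec_induct)
  case base then show ?case by simp
next
  case (step j)
  have "edge_weight j < edge_weight (Suc j)" using edge_weight_less_Suc[of j] assms step by auto
  then show ?case using step by auto
qed

lemma vertex_weight_ge:
  assumes k: "2 \<le> k" "Suc k \<le> s" and l: "edge_weight (k - 1) \<le> l" "l \<le> edge_weight k"
    and i: "i \<in> {1..s}"
  shows "real (n i) + l * real (m i) \<ge> real (n k) + l * real (m k)"
proof -
  define \<phi> where "\<phi> j = real (n j) + l * real (m j)" for j
  have dphi: "\<phi> (Suc j) - \<phi> j = (real (m j) - real (m (Suc j))) * (edge_weight j - l)"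
    if "1 \<le> j" "Suc j \<le> s" for j
  proof -
    have "real (m j) - real (m (Suc j)) > 0" using vertex_m_less that by auto
    then show ?thesis unfolding \<phi>_def edge_weight_def by (simp add: field_simps)
  qed
  show ?thesis
  proof (cases "k \<le> i")
    case True
    have "\<phi> k \<le> \<phi> i" using True i
    proof (induction i rule: dec_induct)
      case base then show ?case by simp
    next
      case (step j)
      have "edge_weight k \<le> edge_weight j" using edge_weight_mono[of k j] step k by auto
      moreover have "real (m j) - real (m (Suc j)) > 0" using vertex_m_less step k by auto
      moreover have "\<phi> (Suc j) - \<phi> j = (real (m j) - real (m (Suc j))) * (edge_weight j - l)"
        using dphi[of j] step k by auto
      ultimately have "\<phi> (Suc j) - \<phi> j \<ge> 0" using l by auto
      then show ?case using step k by auto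
    qed
    then show ?thesis unfolding \<phi>_def .
  next
    case False
    have ik: "i \<le> k" using False by simp
    have "\<phi> k \<le> \<phi> i" using ik i
    proof (induction i rule: inc_induct)
      case base then show ?case by simp
    next
      case (step j)
      have "edge_weight j \<le> edge_weight (k - 1)" using edge_weight_mono[of j "k - 1"] step k by auto
      moreover have "real (m j) - real (m (Suc j)) > 0" using vertex_m_less step k by auto
      moreover have "\<phi> (Suc j) - \<phi> j = (real (m j) - real (m (Suc j))) * (edge_weight j - l)"
        using dphi[of j] step k by auto
      ultimately have "\<phi> (Suc j) - \<phi> j \<le> 0" using l by (simp add: mult_nonneg_nonpos)
      moreover have "Suc j \<le> s" using step k by auto
      ultimately show ?case using step by auto
    qed
    then show ?thesis unfolding \<phi>_def .
  qed
qed

lemma support_weight_ge: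
  assumes k: "2 \<le> k" "Suc k \<le> s" and l: "edge_weight (k - 1) \<le> l" "l \<le> edge_weight k" and bij: "b i j \<noteq> 0"
  shows "real i + l * real j \<ge> real (n k) + l * real (m k)"
proof (rule ccontr)
  assume "\<not> ?thesis"
  then have lt: "real i + l * real j < real (n k) + l * real (m k)" by simp
  have "edge_weight (k - 1) > 0" using edge_weight_pos[of "k - 1"] k by auto
  then have lpos: "l > 0" using l by auto
  obtain i' j' where ext: "(real i', real j') extreme_point_of newton_polygon b"
    and le: "real i' + l * real j' \<le> real i + l * real j"
    using newton_polygon_weight_minimizer_extreme[of l b i j, OF lpos bij] by blast
  obtain t where t: "t \<in> {1..s}" and et: "(real i', real j') = (real (n t), real (m t))"
    using extreme_point_vertex[OF ext] by blast
  have "real (n t) + l * real (m t) \<ge> real (n k) + l * real (m k)"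
    by (rule vertex_weight_ge[OF k l t])
  then show False using et le lt by auto
qed

lemma support_weight_eq_first_vertex:
  assumes k: "2 \<le> k" "Suc k \<le> s" and l: "edge_weight (k - 1) \<le> l" "l \<le> edge_weight k" and b0: "b 0 j \<noteq> 0"
    and le: "l * real j \<le> real (n k) + l * real (m k)"
  shows "n 1 = 0 \<and> m 1 = j"
proof -
  have "edge_weight (k - 1) > 0" using edge_weight_pos[of "k - 1"] k by auto
  then have lpos: "l > 0" using l by auto
  obtain i' j' where ext: "(real i', real j') extreme_point_of newton_polygon b"
    and le1: "real i' + l * real j' \<le> real 0 + l * real j"
    and eq: "real i' + l * real j' = real 0 + l * real j \<longrightarrow> i' \<le> 0"
    using newton_polygon_weight_minimizer_extreme[of l b 0 j, OF lpos b0] by blast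
  obtain t where t: "t \<in> {1..s}" and et: "(real i', real j') = (real (n t), real (m t))"
    using extreme_point_vertex[OF ext] by blast
  have "real (n t) + l * real (m t) \<ge> real (n k) + l * real (m k)"
    by (rule vertex_weight_ge[OF k l t])
  then have "real i' + l * real j' = real 0 + l * real j" using le le1 et by auto
  then have i'0: "i' = 0" using eq by auto
  then have "l * real j' = l * real j" using \<open>real i' + l * real j' = real 0 + l * real j\<close> by simp
  then have jj: "j' = j" using lpos by simp
  have nt: "n t = 0" "m t = j" using et i'0 jj by auto
  have "t = 1"
  proof (rule ccontr)
    assume "t \<noteq> 1"
    then have "1 < t" using t by auto
    then have "n 1 < n t" using vertex_n_less[of 1 t] t by auto
    then show False using nt by auto
  qed
  then show ?thesis using nt by auto
qed

end


section \<open>Growth of real sequences\<close>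

lemma tendsto_zero_of_contraction:
  fixes D e :: "nat \<Rightarrow> real"
  assumes D0: "\<And>n. 0 \<le> D n" and rec: "\<And>n. D (Suc n) \<le> \<rho> * D n + e n"
    and e: "e \<longlonglongrightarrow> 0" and \<rho>: "0 \<le> \<rho>" "\<rho> < 1"
  shows "D \<longlonglongrightarrow> 0"
proof (rule LIMSEQ_I)
  fix r :: real assume r: "0 < r"
  have "r * (1 - \<rho>) / 2 > 0" using r \<rho> by auto
  then obtain N where N: "\<And>n. n \<ge> N \<Longrightarrow> norm (e n) < r * (1 - \<rho>) / 2"
    using LIMSEQ_D[OF e] by (metis diff_zero)
  define F where "F n = D n - r / 2" for n
  have Fstep: "F (Suc n) \<le> \<rho> * F n" if "n \<ge> N" for n
  proof -
    have "e n \<le> r * (1 - \<rho>) / 2" using N[OF that] by auto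
    then show ?thesis using rec[of n] unfolding F_def by (simp add: algebra_simps)
  qed
  have Fm: "F (N + m) \<le> \<rho> ^ m * \<bar>F N\<bar>" for m
  proof (induction m)
    case 0 then show ?case by simp
  next
    case (Suc m)
    have "F (N + Suc m) \<le> \<rho> * F (N + m)" using Fstep[of "N + m"] by simp
    also have "\<dots> \<le> \<rho> * (\<rho> ^ m * \<bar>F N\<bar>)" using Suc \<rho> by (intro mult_left_mono) auto
    finally show ?case by simp
  qed
  have "(\<lambda>m. \<rho> ^ m * \<bar>F N\<bar>) \<longlonglongrightarrow> 0 * \<bar>F N\<bar>"
    using \<rho> by (intro tendsto_mult LIMSEQ_power_zero) auto
  then have "(\<lambda>m. \<rho> ^ m * \<bar>F N\<bar>) \<longlonglongrightarrow> 0" by simp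
  then obtain M where M: "\<And>m. m \<ge> M \<Longrightarrow> norm (\<rho> ^ m * \<bar>F N\<bar>) < r / 2"
    using LIMSEQ_D[of _ 0 "r/2"] r by (metis diff_zero half_gt_zero)
  show "\<exists>no. \<forall>n\<ge>no. norm (D n - 0) < r"
  proof (intro exI allI impI)
    fix n assume n: "n \<ge> N + M"
    define m where "m = n - N"
    have nm: "n = N + m" and mM: "m \<ge> M" using n unfolding m_def by auto
    have "F n \<le> \<rho> ^ m * \<bar>F N\<bar>" using Fm nm by simp
    also have "\<dots> < r / 2" using M[OF mM] by auto
    finally have "D n < r" unfolding F_def by simp
    then show "norm (D n - 0) < r" using D0[of n] by simp
  qed
qed

lemma linear_recurrence_tendsto:
  fixes x :: "nat \<Rightarrow> real"
  assumes c: "\<bar>c\<bar> < 1" and lim: "(\<lambda>n. x (Suc n) - c * x n) \<longlonglongrightarrow> y"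
  shows "x \<longlonglongrightarrow> y / (1 - c)"
proof -
  define L where "L = y / (1 - c)"
  have c1: "1 - c \<noteq> 0" using c by auto
  have "L * (1 - c) = y" unfolding L_def using c1 by simp
  then have L: "L - c * L = y" by (simp add: algebra_simps)
  define D where "D n = \<bar>x n - L\<bar>" for n
  define e where "e n = \<bar>(x (Suc n) - c * x n) - y\<bar>" for n
  have e: "e \<longlonglongrightarrow> 0" unfolding e_def using lim
    by (metis LIM_zero tendsto_rabs_zero)
  have rec: "D (Suc n) \<le> \<bar>c\<bar> * D n + e n" for n
  proof -
    have "x (Suc n) - L = c * (x n - L) + ((x (Suc n) - c * x n) - y)" using L by (simp add: algebra_simps)
    then have "\<bar>x (Suc n) - L\<bar> \<le> \<bar>c * (x n - L)\<bar> + \<bar>(x (Suc n) - c * x n) - y\<bar>" by linarith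
    then show ?thesis unfolding D_def e_def by (simp add: abs_mult)
  qed
  have "D \<longlonglongrightarrow> 0" by (rule tendsto_zero_of_contraction[OF _ rec e]) (use c in \<open>auto simp: D_def\<close>)
  then have "(\<lambda>n. x n - L) \<longlonglongrightarrow> 0" unfolding D_def by (simp add: tendsto_rabs_zero_iff)
  then show ?thesis unfolding L_def[symmetric] by (simp add: LIM_zero_iff)
qed

lemma convergent_div_power_of_bounded_defect:
  fixes x :: "nat \<Rightarrow> real" and \<delta> E :: real
  assumes d: "\<delta> > 1" and b: "\<And>n. \<bar>x (Suc n) - \<delta> * x n\<bar> \<le> E"
  shows "convergent (\<lambda>n. x n / \<delta> ^ n)"
proof -
  define y where "y n = x n / \<delta> ^ n" for n
  define f where "f n = y (Suc n) - y n" for n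
  have f: "\<bar>f n\<bar> \<le> E * (1 / \<delta>) ^ Suc n" for n
  proof -
    have "f n = (x (Suc n) - \<delta> * x n) / \<delta> ^ Suc n" unfolding f_def y_def using d
      by (simp add: field_simps)
    then have "\<bar>f n\<bar> = \<bar>x (Suc n) - \<delta> * x n\<bar> / \<delta> ^ Suc n" using d by (simp add: abs_divide)
    also have "\<dots> \<le> E / \<delta> ^ Suc n" using b[of n] d by (intro divide_right_mono) auto
    finally show ?thesis by (simp add: power_one_over divide_inverse power_inverse)
  qed
  have "summable (\<lambda>n. E * (1 / \<delta>) ^ Suc n)"
    using d by (intro summable_mult summable_Suc_iff[THEN iffD2] summable_geometric) auto
  then have sf: "summable f" by (rule summable_comparison_test'[of _ 0]) (use f in simp)
  have "(\<lambda>n. \<Sum>i<n. f i) \<longlonglongrightarrow> suminf f" by (rule summable_LIMSEQ[OF sf])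
  then have "(\<lambda>n. y 0 + (\<Sum>i<n. f i)) \<longlonglongrightarrow> y 0 + suminf f" by (intro tendsto_add) auto
  moreover have "y 0 + (\<Sum>i<n. f i) = y n" for n unfolding f_def by (simp add: sum_lessThan_telescope)
  ultimately have "y \<longlonglongrightarrow> y 0 + suminf f" by simp
  then show ?thesis unfolding convergent_def y_def by (rule exI)
qed

lemma green_seq_pos:
  assumes "u k > 0" "\<delta> > 0"
  shows "green_seq \<delta> u k = ereal (ln (u k) / real \<delta> ^ k)"
  using assms unfolding green_seq_def eln_def by simp

lemma green_seq_zero:
  assumes "u k = 0" "\<delta> > 0"
  shows "green_seq \<delta> u k = -\<infinity>"
  using assms unfolding green_seq_def eln_def by simp

lemma green_seq_tendsto_ereal:
  assumes pos: "\<And>k. u k > 0" and d: "\<delta> > 0"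
    and lim: "(\<lambda>k. ln (u k) / real \<delta> ^ k) \<longlonglongrightarrow> L"
  shows "green_seq \<delta> u \<longlonglongrightarrow> ereal L"
proof -
  have "(\<lambda>k. ereal (ln (u k) / real \<delta> ^ k)) \<longlonglongrightarrow> ereal L" using lim by auto
  moreover have "(\<lambda>k. ereal (ln (u k) / real \<delta> ^ k)) = green_seq \<delta> u"
    using green_seq_pos[OF pos d] by auto
  ultimately show ?thesis by simp
qed

lemma green_seq_shift:
  assumes d: "\<delta> > 0" and lim: "green_seq \<delta> (\<lambda>k. u (k + N)) \<longlonglongrightarrow> L"
  shows "green_seq \<delta> u \<longlonglongrightarrow> ereal (1 / real \<delta> ^ N) * L"
proof -
  have eq: "green_seq \<delta> u (k + N) = ereal (1 / real \<delta> ^ N) * green_seq \<delta> (\<lambda>k. u (k + N)) k" for k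
  proof -
    have "ereal (1 / real \<delta> ^ (k + N)) = ereal (1 / real \<delta> ^ N) * ereal (1 / real \<delta> ^ k)"
      by (simp add: power_add)
    then show ?thesis unfolding green_seq_def by (metis mult.assoc)
  qed
  have "(\<lambda>k. ereal (1 / real \<delta> ^ N) * green_seq \<delta> (\<lambda>k. u (k + N)) k) \<longlonglongrightarrow> ereal (1 / real \<delta> ^ N) * L"
    by (rule tendsto_cmult_ereal[OF _ lim]) simp
  then have "(\<lambda>k. green_seq \<delta> u (k + N)) \<longlonglongrightarrow> ereal (1 / real \<delta> ^ N) * L" using eq by simp
  then show ?thesis by (rule LIMSEQ_offset)
qed

lemma bounded_div_power_tendsto_zero:
  fixes f :: "nat \<Rightarrow> real"
  assumes b: "\<And>n. \<bar>f n\<bar> \<le> E" and d: "\<delta> > 1"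
  shows "(\<lambda>n. f n / \<delta> ^ n) \<longlonglongrightarrow> 0"
proof (rule Lim_null_comparison)
  show "\<forall>\<^sub>F n in sequentially. norm (f n / \<delta> ^ n) \<le> E * (1 / \<delta>) ^ n"
  proof (intro always_eventually allI)
    fix n
    have "norm (f n / \<delta> ^ n) = \<bar>f n\<bar> / \<delta> ^ n" using d by (simp add: abs_divide)
    also have "\<dots> \<le> E / \<delta> ^ n" using b[of n] d by (intro divide_right_mono) auto
    finally show "norm (f n / \<delta> ^ n) \<le> E * (1 / \<delta>) ^ n" by (simp add: power_one_over)
  qed
  show "(\<lambda>n. E * (1 / \<delta>) ^ n) \<longlonglongrightarrow> 0"
    using d by (intro tendsto_mult_right_zero LIMSEQ_power_zero) auto
qed

lemma abs_ln_sub_le_of_power_bounds: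
  assumes "x > 0" "c1 > 0" "c1 * x ^ k \<le> y" "y \<le> c2 * x ^ k"
  shows "\<bar>ln y - real k * ln x\<bar> \<le> \<bar>ln c1\<bar> + \<bar>ln c2\<bar>"
proof -
  have y: "y > 0" using assms by (smt (verit) mult_pos_pos zero_less_power)
  have c2: "c2 > 0" using assms y by (smt (verit) mult_nonpos_nonneg zero_le_power)
  have "ln (c1 * x ^ k) \<le> ln y" using assms y by (subst ln_le_cancel_iff) auto
  moreover have "ln y \<le> ln (c2 * x ^ k)" using assms y c2 by (subst ln_le_cancel_iff) auto
  ultimately have "ln c1 + real k * ln x \<le> ln y" "ln y \<le> ln c2 + real k * ln x"
    using assms c2 by (simp_all add: ln_mult ln_realpow)
  then show ?thesis by linarith
qed

text \<open>With \<open>x = ln Zs\<close>, \<open>y = ln Ws\<close>: \<open>y\<^sub>n\<^sub>+\<^sub>1 = \<gamma> x\<^sub>n + d y\<^sub>n + O(1)\<close>, and \<open>d < \<delta>\<close> makes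
  the recursion for \<open>y\<^sub>n / \<delta>\<^sup>n\<close> contracting.\<close>

lemma green_limits_monomial_recurrence:
  fixes Zs Ws :: "nat \<Rightarrow> real" and \<delta> \<gamma> d :: nat
  assumes Zp: "\<And>n. Zs n > 0" and Wp: "\<And>n. Ws n > 0"
    and c: "c1 > 0" "e1 > 0"
    and Z1: "\<And>n. c1 * Zs n ^ \<delta> \<le> Zs (Suc n)" and Z2: "\<And>n. Zs (Suc n) \<le> c2 * Zs n ^ \<delta>"
    and W1: "\<And>n. e1 * (Zs n ^ \<gamma> * Ws n ^ d) \<le> Ws (Suc n)"
    and W2: "\<And>n. Ws (Suc n) \<le> e2 * (Zs n ^ \<gamma> * Ws n ^ d)"
    and d\<delta>: "d < \<delta>" and \<delta>2: "\<delta> \<ge> 2"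
  shows "\<exists>g. green_seq \<delta> Zs \<longlonglongrightarrow> ereal g \<and>
             green_seq \<delta> Ws \<longlonglongrightarrow> ereal (real \<gamma> / (real \<delta> - real d) * g)"
proof -
  have d1: "real \<delta> > 1" using \<delta>2 by linarith
  define x where "x n = ln (Zs n)" for n
  define y where "y n = ln (Ws n)" for n
  have xs: "\<bar>x (Suc n) - real \<delta> * x n\<bar> \<le> \<bar>ln c1\<bar> + \<bar>ln c2\<bar>" for n
    unfolding x_def using abs_ln_sub_le_of_power_bounds[OF Zp c(1) Z1 Z2] by simp
  have "convergent (\<lambda>n. x n / real \<delta> ^ n)" by (rule convergent_div_power_of_bounded_defect[of "real \<delta>" x, OF d1 xs])
  then obtain g where A: "(\<lambda>n. x n / real \<delta> ^ n) \<longlonglongrightarrow> g" unfolding convergent_def by blast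
  have ZW: "Zs n ^ \<gamma> * Ws n ^ d > 0" for n using Zp Wp by auto
  have ys: "\<bar>y (Suc n) - (real \<gamma> * x n + real d * y n)\<bar> \<le> \<bar>ln e1\<bar> + \<bar>ln e2\<bar>" for n
  proof -
    have "\<bar>ln (Ws (Suc n)) - real 1 * ln (Zs n ^ \<gamma> * Ws n ^ d)\<bar> \<le> \<bar>ln e1\<bar> + \<bar>ln e2\<bar>"
      using abs_ln_sub_le_of_power_bounds[of "Zs n ^ \<gamma> * Ws n ^ d" e1 1 "Ws (Suc n)" e2] ZW c W1 W2 by simp
    moreover have "ln (Zs n ^ \<gamma> * Ws n ^ d) = real \<gamma> * x n + real d * y n"
      unfolding x_def y_def using Zp[of n] Wp[of n] by (simp add: ln_mult ln_realpow)
    ultimately show ?thesis unfolding y_def by simp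
  qed
  define err where "err n = y (Suc n) - (real \<gamma> * x n + real d * y n)" for n
  have "(\<lambda>n. err n / real \<delta> ^ n) \<longlonglongrightarrow> 0"
    by (rule bounded_div_power_tendsto_zero[OF _ d1]) (use ys in \<open>auto simp: err_def\<close>)
  then have e0: "(\<lambda>n. err n / real \<delta> ^ n / real \<delta>) \<longlonglongrightarrow> 0 / real \<delta>" using d1 by (intro tendsto_divide) auto
  have "(\<lambda>n. real \<gamma> / real \<delta> * (x n / real \<delta> ^ n) + err n / real \<delta> ^ n / real \<delta>) \<longlonglongrightarrow>
        real \<gamma> / real \<delta> * g + 0 / real \<delta>"
    by (intro tendsto_add tendsto_mult e0 A tendsto_const)
  moreover have "y (Suc n) / real \<delta> ^ Suc n - real d / real \<delta> * (y n / real \<delta> ^ n) =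
        real \<gamma> / real \<delta> * (x n / real \<delta> ^ n) + err n / real \<delta> ^ n / real \<delta>" for n
    unfolding err_def using d1 by (simp add: field_simps)
  ultimately have lim: "(\<lambda>n. y (Suc n) / real \<delta> ^ Suc n - real d / real \<delta> * (y n / real \<delta> ^ n)) \<longlonglongrightarrow>
        real \<gamma> / real \<delta> * g" by simp
  have cd: "\<bar>real d / real \<delta>\<bar> < 1" using d\<delta> d1 by (simp add: divide_simps)
  have "(\<lambda>n. y n / real \<delta> ^ n) \<longlonglongrightarrow> (real \<gamma> / real \<delta> * g) / (1 - real d / real \<delta>)"
    by (rule linear_recurrence_tendsto[OF cd, of "\<lambda>n. y n / real \<delta> ^ n"]) (use lim in simp)
  also have "(real \<gamma> / real \<delta> * g) / (1 - real d / real \<delta>) = real \<gamma> / (real \<delta> - real d) * g"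
    using d1 d\<delta> by (simp add: field_simps)
  finally have limW: "(\<lambda>n. ln (Ws n) / real \<delta> ^ n) \<longlonglongrightarrow> real \<gamma> / (real \<delta> - real d) * g"
    unfolding y_def .
  have "\<delta> > 0" using \<delta>2 by simp
  have "green_seq \<delta> Zs \<longlonglongrightarrow> ereal g"
    by (rule green_seq_tendsto_ereal[OF Zp \<open>\<delta> > 0\<close>]) (use A in \<open>simp add: x_def\<close>)
  moreover have "green_seq \<delta> Ws \<longlonglongrightarrow> ereal (real \<gamma> / (real \<delta> - real d) * g)"
    by (rule green_seq_tendsto_ereal[OF Wp \<open>\<delta> > 0\<close> limW])
  ultimately show ?thesis by blast
qed



lemma le_neg_power_of_affine_recurrence:
  fixes u :: "nat \<Rightarrow> real"
  assumes D: "D \<ge> 2" and \<kappa>: "\<kappa> \<ge> 0"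
    and step: "\<And>n. u (Suc n) \<le> \<kappa> + D * u n" and start: "u 0 \<le> - \<kappa> - 1"
  shows "u n \<le> - (D ^ n)"
proof -
  define c where "c = \<kappa> / (D - 1)"
  have c: "0 \<le> c" "c \<le> \<kappa>" "\<kappa> + c = D * c" unfolding c_def using D \<kappa>
    by (simp, simp add: divide_le_eq mult_le_cancel_left1, simp add: field_simps)
  have "u n + c \<le> D ^ n * (u 0 + c)"
  proof (induction n)
    case 0
    then show ?case by simp
  next
    case (Suc n)
    have "D * (u n + c) = D * u n + (\<kappa> + c)" using c(3) by (simp add: distrib_left)
    then have "u (Suc n) + c \<le> D * (u n + c)" using step[of n] by linarith
    also have "\<dots> \<le> D * (D ^ n * (u 0 + c))" using Suc D by (intro mult_left_mono) auto
    finally show ?case by simp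
  qed
  moreover have "D ^ n * (u 0 + c) \<le> D ^ n * (-1)"
    using start c D by (intro mult_left_mono) auto
  ultimately show ?thesis using c by simp
qed

lemma le_root_of_powr_le:
  fixes Z M \<alpha> :: real
  assumes "Z \<ge> 0" "\<alpha> > 0" "Z powr \<alpha> \<le> M"
  shows "Z \<le> M powr (1/\<alpha>)"
proof (cases "Z = 0")
  case False
  then have "Z = (Z powr \<alpha>) powr (1/\<alpha>)" using assms by (simp add: powr_powr)
  also have "\<dots> \<le> M powr (1/\<alpha>)" using assms by (intro powr_mono2) auto
  finally show ?thesis .
qed simp

lemma powr_le_of_le_root:
  fixes r C t :: real
  assumes "0 < r" "r \<le> C powr (1/t)" "t > 0" "C > 0"
  shows "r powr t \<le> C"
proof -
  have "r powr t \<le> (C powr (1/t)) powr t" using assms by (intro powr_mono2) auto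
  also have "\<dots> = C" using assms by (simp add: powr_powr)
  finally show ?thesis .
qed

lemma max_powr_step:
  fixes Z Z' W' M K c2 \<alpha> :: real and \<delta> :: nat
  assumes \<alpha>: "\<alpha> > 0" and Z: "Z > 0" "Z' \<ge> 0" and K: "K \<ge> 0" and c2: "c2 > 0"
    and M: "Z powr \<alpha> \<le> M" "M \<le> 1"
    and Z': "Z' \<le> c2 * Z ^ \<delta>"
    and W': "W' \<le> K * (Z * M powr (real \<delta> - 1/\<alpha>) + M powr (real \<delta> + 1))"
  shows "max (Z' powr \<alpha>) W' \<le> (2 * K + c2 powr \<alpha>) * M powr real \<delta>"
proof -
  have Mpos: "M > 0" using M(1) Z by (smt (verit) powr_gt_zero)
  have "Z' powr \<alpha> \<le> (c2 * Z ^ \<delta>) powr \<alpha>" using Z' Z \<alpha> by (intro powr_mono2) auto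
  also have "\<dots> = c2 powr \<alpha> * (Z powr \<alpha>) powr real \<delta>" using c2 Z
    by (simp add: powr_mult powr_powr powr_realpow[symmetric] mult.commute)
  also have "\<dots> \<le> c2 powr \<alpha> * M powr real \<delta>" using M Z
    by (intro mult_left_mono powr_mono2) auto
  finally have Z'_le: "Z' powr \<alpha> \<le> c2 powr \<alpha> * M powr real \<delta>" .
  have "Z \<le> M powr (1/\<alpha>)" using Z \<alpha> M(1) by (intro le_root_of_powr_le) auto
  then have "Z * M powr (real \<delta> - 1/\<alpha>) \<le> M powr (1/\<alpha>) * M powr (real \<delta> - 1/\<alpha>)"
    by (intro mult_right_mono) auto
  also have "\<dots> = M powr real \<delta>" using Mpos by (simp add: powr_add[symmetric])
  finally have "Z * M powr (real \<delta> - 1/\<alpha>) \<le> M powr real \<delta>" .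
  moreover have "M powr (real \<delta> + 1) \<le> M powr real \<delta>" using M(2) Mpos by (intro powr_mono') auto
  ultimately have "W' \<le> K * (M powr real \<delta> + M powr real \<delta>)"
    using W' K by (smt (verit) mult_left_mono)
  then have "W' \<le> 2 * K * M powr real \<delta>" by simp
  then show ?thesis using Z'_le K
    by (simp add: distrib_right add_increasing add_increasing2)
qed

lemma ln_le_of_two_term_bound:
  fixes W K P1 P2 :: real
  assumes "0 < W" "0 < K" "0 < P1" "0 < P2" "W \<le> K * (P1 + P2)"
  shows "ln W \<le> ln (2 * K) + max (ln P1) (ln P2)"
proof -
  have "P1 \<le> max P1 P2" "P2 \<le> max P1 P2" by simp_all
  then have "K * (P1 + P2) \<le> K * (2 * max P1 P2)" using assms(2) by (intro mult_left_mono) auto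
  then have "W \<le> 2 * K * max P1 P2" using assms(5) by simp
  then have "ln W \<le> ln (2 * K * max P1 P2)" using assms by (subst ln_le_cancel_iff) auto
  also have "\<dots> = ln (2 * K) + ln (max P1 P2)" using assms by (simp add: ln_mult)
  also have "ln (max P1 P2) = max (ln P1) (ln P2)"
    using assms(3,4) by (cases "P1 \<le> P2") (simp_all add: max_def)
  finally show ?thesis .
qed

text \<open>If the first term of the bound on \<open>|q|\<close> dominates, the exponent \<open>\<delta> - 1/\<alpha>\<close> gives the
  factor \<open>1 - 1/(\<alpha> \<delta>)\<close>; if the second one does, the extra factor \<open>M\<close> is absorbed by
  \<open>V \<le> -G ln M\<close>. Here \<open>x = ln |z|\<close>, \<open>u = ln M\<close>, \<open>V = u - \<alpha> x\<close>.\<close>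

lemma defect_exponent_contraction:
  fixes x u \<alpha> \<delta> G :: real
  assumes \<alpha>: "\<alpha> > 0" and \<delta>: "\<delta> > 0" and G: "G > 0"
    and V: "0 \<le> u - \<alpha> * x" "u - \<alpha> * x \<le> - G * u"
  shows "max (x + (\<delta> - 1/\<alpha>) * u) ((\<delta> + 1) * u) - \<alpha> * \<delta> * x
           \<le> \<delta> * max (1 - 1 / (\<alpha> * \<delta>)) (1 - 1 / (\<delta> * G)) * (u - \<alpha> * x)"
proof -
  have "1 - 1 / (\<alpha> * \<delta>) \<le> max (1 - 1 / (\<alpha> * \<delta>)) (1 - 1 / (\<delta> * G))"
    "1 - 1 / (\<delta> * G) \<le> max (1 - 1 / (\<alpha> * \<delta>)) (1 - 1 / (\<delta> * G))" by simp_all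
  then have mono: "\<delta> * (1 - 1 / (\<alpha> * \<delta>)) * (u - \<alpha> * x) \<le> \<delta> * max (1 - 1 / (\<alpha> * \<delta>)) (1 - 1 / (\<delta> * G)) * (u - \<alpha> * x)"
    "\<delta> * (1 - 1 / (\<delta> * G)) * (u - \<alpha> * x) \<le> \<delta> * max (1 - 1 / (\<alpha> * \<delta>)) (1 - 1 / (\<delta> * G)) * (u - \<alpha> * x)"
    using \<delta> V(1) by (auto intro!: mult_right_mono mult_left_mono)
  have "x + (\<delta> - 1/\<alpha>) * u - \<alpha> * \<delta> * x = \<delta> * (1 - 1 / (\<alpha> * \<delta>)) * (u - \<alpha> * x)"
    using \<alpha> \<delta> by (simp add: field_simps)
  moreover have "(\<delta> + 1) * u - \<alpha> * \<delta> * x \<le> \<delta> * (1 - 1 / (\<delta> * G)) * (u - \<alpha> * x)"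
  proof -
    have "u \<le> - ((u - \<alpha> * x) / G)" using V(2) G by (simp add: field_simps)
    moreover have "\<delta> * (u - \<alpha> * x) = \<delta> * u - \<alpha> * \<delta> * x" by (simp add: algebra_simps)
    ultimately have "(\<delta> + 1) * u - \<alpha> * \<delta> * x \<le> \<delta> * (u - \<alpha> * x) - (u - \<alpha> * x) / G"
      by (simp add: distrib_right)
    also have "\<dots> = \<delta> * (1 - 1 / (\<delta> * G)) * (u - \<alpha> * x)" using \<delta> G by (simp add: field_simps)
    finally show ?thesis .
  qed
  ultimately show ?thesis
    unfolding max_diff_distrib_left using mono by (intro max.boundedI) linarith+
qed

lemma ln_max_contraction_step:
  fixes Z Z' W' M K c1 \<alpha> G :: real and \<delta> :: nat
  defines "V \<equiv> ln M - \<alpha> * ln Z"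
  assumes \<alpha>: "\<alpha> > 0" and \<delta>: "\<delta> \<ge> 1" and G: "G \<ge> 1" and K: "K \<ge> 0" and c1: "c1 > 0"
    and Z: "Z > 0" "Z' > 0" "W' \<ge> 0" and M: "Z powr \<alpha> \<le> M"
    and Z': "c1 * Z ^ \<delta> \<le> Z'"
    and W': "W' \<le> K * (Z * M powr (real \<delta> - 1/\<alpha>) + M powr (real \<delta> + 1))"
    and small: "V \<le> - G * ln M"
  shows "ln (max (Z' powr \<alpha>) W') - \<alpha> * ln Z'
           \<le> ln (2 * K + 1) + \<alpha> * \<bar>ln c1\<bar> + real \<delta> * max (1 - 1 / (\<alpha> * real \<delta>)) (1 - 1 / (real \<delta> * G)) * V"
    (is "?V' \<le> ?\<kappa> + real \<delta> * ?\<rho> * V")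
proof -
  have Mpos: "M > 0" using M Z by (smt (verit) powr_gt_zero)
  have "ln (Z powr \<alpha>) \<le> ln M" using M Z Mpos by (subst ln_le_cancel_iff) auto
  then have V0: "V \<ge> 0" unfolding V_def using Z by (simp add: ln_powr)
  show ?thesis
  proof (cases "W' \<le> Z' powr \<alpha>")
    case True
    then have "?V' = 0" using Z by (simp add: ln_powr max_def)
    moreover have "1 * 1 \<le> real \<delta> * G" using \<delta> G by (intro mult_mono) auto
    then have "?\<rho> \<ge> 0" by (simp add: le_max_iff_disj)
    ultimately show ?thesis using K \<alpha> V0 by simp
  next
    case False
    then have W'_pos: "W' > 0" using Z by (smt (verit) powr_gt_zero)
    then have "K > 0" using K W' by (cases "K = 0") auto
    have "\<alpha> * ln c1 + \<alpha> * real \<delta> * ln Z \<le> \<alpha> * ln Z'"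
    proof -
      have "ln (c1 * Z ^ \<delta>) \<le> ln Z'" using Z' Z c1 by (subst ln_le_cancel_iff) auto
      then have "ln c1 + real \<delta> * ln Z \<le> ln Z'" using Z c1 by (simp add: ln_mult ln_realpow)
      then have "\<alpha> * (ln c1 + real \<delta> * ln Z) \<le> \<alpha> * ln Z'" using \<alpha> by (intro mult_left_mono) auto
      then show ?thesis by (simp add: algebra_simps)
    qed
    moreover have "- (\<alpha> * ln c1) \<le> \<alpha> * \<bar>ln c1\<bar>" using \<alpha> by (simp add: abs_if)
    moreover have "ln (2 * K) \<le> ln (2 * K + 1)" using \<open>K > 0\<close> by simp
    moreover have "ln W' \<le> ln (2 * K) + max (ln Z + (real \<delta> - 1/\<alpha>) * ln M) ((real \<delta> + 1) * ln M)"
      using ln_le_of_two_term_bound[OF W'_pos \<open>K > 0\<close> _ _ W'] Z Mpos by (simp add: ln_mult ln_powr)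
    moreover have "max (ln Z + (real \<delta> - 1/\<alpha>) * ln M) ((real \<delta> + 1) * ln M) - \<alpha> * real \<delta> * ln Z
        \<le> real \<delta> * ?\<rho> * V"
      using defect_exponent_contraction[where x = "ln Z" and u = "ln M" and \<delta> = "real \<delta>"] \<alpha> \<delta> G V0 small
      unfolding V_def by simp
    moreover have "?V' = ln W' - \<alpha> * ln Z'" using False by simp
    ultimately show ?thesis by linarith
  qed
qed

lemma green_seq_tendsto_minf_of_superlinear:
  fixes W :: "nat \<Rightarrow> real" and \<delta> :: nat and K K' :: real
  assumes \<delta>2: "\<delta> \<ge> 2" and Wn: "\<And>n. W n \<ge> 0" and K': "K \<le> K'" "1 \<le> K'"
    and step: "\<And>n. W n > 0 \<Longrightarrow> W (Suc n) \<le> K * W n powr (real \<delta> + 1)"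
    and zero: "\<And>n. W n = 0 \<Longrightarrow> W (Suc n) = 0"
    and small: "W 0 \<le> exp (- ln K' - 1)"
  shows "green_seq \<delta> W \<longlonglongrightarrow> -\<infinity>"
proof (cases "\<exists>n0. W n0 = 0")
  case True
  then obtain n0 where "W n0 = 0" by blast
  have "W n = 0" if "n \<ge> n0" for n
    using that by (induction n rule: dec_induct) (use \<open>W n0 = 0\<close> zero in auto)
  then have "\<forall>\<^sub>F n in sequentially. green_seq \<delta> W n = -\<infinity>"
    unfolding eventually_sequentially using \<delta>2 by (intro exI[of _ n0] allI impI green_seq_zero) auto
  then show ?thesis by (rule tendsto_eventually)
next
  case False
  then have Wp: "W n > 0" for n using Wn[of n] by (metis less_eq_real_def)
  have dpos: "real \<delta> > 0" using \<delta>2 by simp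
  define u where "u n = ln (W n)" for n
  have "u (Suc n) \<le> ln K' + (real \<delta> + 1) * u n" for n
  proof -
    have "K * W n powr (real \<delta> + 1) \<le> K' * W n powr (real \<delta> + 1)"
      using K' by (intro mult_right_mono) auto
    then have "W (Suc n) \<le> K' * W n powr (real \<delta> + 1)" using step[OF Wp[of n]] by linarith
    then have "ln (W (Suc n)) \<le> ln (K' * W n powr (real \<delta> + 1))"
      using Wp[of n] Wp[of "Suc n"] K' by (subst ln_le_cancel_iff) auto
    then show ?thesis unfolding u_def using Wp[of n] K' by (simp add: ln_mult ln_powr)
  qed
  moreover have "u 0 \<le> - ln K' - 1"
    unfolding u_def using small Wp[of 0] by (metis ln_exp ln_le_cancel_iff exp_gt_zero)
  ultimately have u_le: "u n \<le> - ((real \<delta> + 1) ^ n)" for n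
    using le_neg_power_of_affine_recurrence[of "real \<delta> + 1" "ln K'" u] \<delta>2 K' by simp
  show ?thesis unfolding tendsto_MInfty
  proof
    fix r :: real
    have q1: "(real \<delta> + 1) / real \<delta> > 1" using dpos by simp
    obtain N where N: "\<bar>r\<bar> < ((real \<delta> + 1) / real \<delta>) ^ N" using real_arch_pow[OF q1] by blast
    show "\<forall>\<^sub>F n in sequentially. green_seq \<delta> W n < ereal r"
      unfolding eventually_sequentially
    proof (intro exI allI impI)
      fix n assume "n \<ge> N"
      then have "((real \<delta> + 1) / real \<delta>) ^ N \<le> ((real \<delta> + 1) / real \<delta>) ^ n"
        using q1 by (intro power_increasing) auto
      moreover have "u n / real \<delta> ^ n \<le> - (((real \<delta> + 1) / real \<delta>) ^ n)"
        using divide_right_mono[OF u_le[of n], of "real \<delta> ^ n"] dpos by (simp add: power_divide)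
      ultimately have "u n / real \<delta> ^ n < r" using N by linarith
      then show "green_seq \<delta> W n < ereal r"
        using green_seq_pos[of W n \<delta>] Wp dpos unfolding u_def by simp
    qed
  qed
qed


lemma ln_max_le_neg_power:
  fixes Zs Ws :: "nat \<Rightarrow> real" and \<delta> :: nat and \<alpha> c2 K :: real
  defines "M \<equiv> \<lambda>n. max (Zs n powr \<alpha>) (Ws n)"
  assumes Zp: "\<And>n. Zs n > 0" and c: "c2 > 0" "K \<ge> 0" "\<alpha> > 0" and \<delta>2: "\<delta> \<ge> 2"
    and Z2: "\<And>n. Zs (Suc n) \<le> c2 * Zs n ^ \<delta>"
    and W: "\<And>n. Ws (Suc n) \<le> K * (Zs n * M n powr (real \<delta> - 1/\<alpha>) + M n powr (real \<delta> + 1))"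
    and small1: "\<And>n. M n \<le> 1"
    and small0: "M 0 \<le> exp (- ln (2 * K + c2 powr \<alpha> + 1) - 1)"
  shows "ln (M n) \<le> - (real \<delta> ^ n)"
proof -
  define K' where "K' = 2 * K + c2 powr \<alpha> + 1"
  have K': "K' \<ge> 1" unfolding K'_def using c by simp
  have ZaM: "Zs n powr \<alpha> \<le> M n" for n unfolding M_def by simp
  have Mp: "M n > 0" for n
  proof -
    have "Zs n powr \<alpha> > 0" using Zp[of n] by simp
    then show ?thesis using ZaM[of n] by linarith
  qed
  have "ln (M (Suc n)) \<le> ln K' + real \<delta> * ln (M n)" for n
  proof -
    have "M (Suc n) = max (Zs (Suc n) powr \<alpha>) (Ws (Suc n))" unfolding M_def ..
    also have "\<dots> \<le> (2 * K + c2 powr \<alpha>) * M n powr real \<delta>"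
      using max_powr_step[OF c(3) Zp[of n] _ c(2) c(1) ZaM[of n] small1[of n] Z2[of n] W[of n]] Zp[of "Suc n"]
      by simp
    also have "\<dots> \<le> K' * M n powr real \<delta>" unfolding K'_def by (intro mult_right_mono) auto
    finally have "ln (M (Suc n)) \<le> ln (K' * M n powr real \<delta>)"
      using Mp[of "Suc n"] Mp[of n] K' by (subst ln_le_cancel_iff) auto
    then show ?thesis using K' Mp[of n] by (simp add: ln_mult ln_powr)
  qed
  moreover have "ln (M 0) \<le> - ln K' - 1" unfolding K'_def
    using small0 Mp[of 0] by (metis ln_exp ln_le_cancel_iff exp_gt_zero)
  ultimately show ?thesis
    using le_neg_power_of_affine_recurrence[of "real \<delta>" "ln K'" "\<lambda>n. ln (M n)"] \<delta>2 K' by simp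
qed

lemma div_power_tendsto_zero_of_recurrence:
  fixes V :: "nat \<Rightarrow> real" and \<delta> \<rho> \<kappa> :: real
  assumes \<delta>: "\<delta> > 1" and \<rho>: "0 \<le> \<rho>" "\<rho> < 1"
    and V0: "\<And>n. V n \<ge> 0" and step: "\<And>n. V (Suc n) \<le> \<kappa> + \<delta> * \<rho> * V n"
  shows "(\<lambda>n. V n / \<delta> ^ n) \<longlonglongrightarrow> 0"
proof -
  define D where "D n = V n / \<delta> ^ n" for n
  have D_step: "D (Suc n) \<le> \<rho> * D n + \<kappa> / \<delta> ^ n / \<delta>" for n
  proof -
    have "D (Suc n) \<le> (\<kappa> + \<delta> * \<rho> * V n) / \<delta> ^ Suc n"
      unfolding D_def using step[of n] \<delta> by (intro divide_right_mono) auto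
    also have "\<dots> = \<rho> * D n + \<kappa> / \<delta> ^ n / \<delta>"
      unfolding D_def using \<delta> by (simp add: field_simps)
    finally show ?thesis .
  qed
  have D_nonneg: "D n \<ge> 0" for n unfolding D_def using V0[of n] \<delta> by simp
  have "(\<lambda>n. \<kappa> / \<delta> ^ n / \<delta>) \<longlonglongrightarrow> 0"
  proof -
    have "(\<lambda>n. \<kappa> / \<delta> ^ n) \<longlonglongrightarrow> 0" by (rule bounded_div_power_tendsto_zero[OF _ \<delta>]) auto
    then have "(\<lambda>n. \<kappa> / \<delta> ^ n / \<delta>) \<longlonglongrightarrow> 0 / \<delta>" using \<delta> by (intro tendsto_divide) auto
    then show ?thesis by simp
  qed
  then have "D \<longlonglongrightarrow> 0"
    by (rule tendsto_zero_of_contraction[where e = "\<lambda>n. \<kappa> / \<delta> ^ n / \<delta>", OF D_nonneg D_step _ \<rho>])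
  then show ?thesis unfolding D_def .
qed

text \<open>Since \<open>ln M\<^sub>n \<le> -\<delta>\<^sup>n\<close>, the contraction step applies to the defect
  \<open>ln M\<^sub>n - \<alpha> ln Zs\<^sub>n\<close>, which is therefore \<open>o(\<delta>\<^sup>n)\<close>.\<close>

lemma green_limits_max_recurrence:
  fixes Zs Ws :: "nat \<Rightarrow> real" and \<delta> :: nat and \<alpha> c1 c2 K :: real
  defines "M \<equiv> \<lambda>n. max (Zs n powr \<alpha>) (Ws n)"
  assumes Zp: "\<And>n. Zs n > 0" and Wn: "\<And>n. Ws n \<ge> 0"
    and c: "c1 > 0" "c2 > 0" "K \<ge> 0" "\<alpha> > 0" and \<delta>2: "\<delta> \<ge> 2"
    and Z1: "\<And>n. c1 * Zs n ^ \<delta> \<le> Zs (Suc n)" and Z2: "\<And>n. Zs (Suc n) \<le> c2 * Zs n ^ \<delta>"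
    and W: "\<And>n. Ws (Suc n) \<le> K * (Zs n * M n powr (real \<delta> - 1/\<alpha>) + M n powr (real \<delta> + 1))"
    and small1: "\<And>n. M n \<le> 1"
    and small0: "M 0 \<le> exp (- ln (2 * K + c2 powr \<alpha> + 1) - 1)"
  shows "\<exists>g. green_seq \<delta> Zs \<longlonglongrightarrow> ereal g \<and> green_seq \<delta> M \<longlonglongrightarrow> ereal (\<alpha> * g)"
proof -
  have d1: "real \<delta> > 1" and dpos: "real \<delta> > 0" and "\<delta> > 0" using \<delta>2 by simp_all
  define x where "x n = ln (Zs n)" for n
  define u where "u n = ln (M n)" for n
  define V where "V n = u n - \<alpha> * x n" for n
  have ZaM: "Zs n powr \<alpha> \<le> M n" for n unfolding M_def by simp
  have Mp: "M n > 0" for n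
  proof -
    have "Zs n powr \<alpha> > 0" using Zp[of n] by simp
    then show ?thesis using ZaM[of n] by linarith
  qed
  have "\<bar>x (Suc n) - real \<delta> * x n\<bar> \<le> \<bar>ln c1\<bar> + \<bar>ln c2\<bar>" for n
    unfolding x_def using abs_ln_sub_le_of_power_bounds[OF Zp c(1) Z1 Z2] by simp
  then have "convergent (\<lambda>n. x n / real \<delta> ^ n)" by (rule convergent_div_power_of_bounded_defect[OF d1])
  then obtain g where x_lim: "(\<lambda>n. x n / real \<delta> ^ n) \<longlonglongrightarrow> g" unfolding convergent_def by blast
  then have "Bseq (\<lambda>n. x n / real \<delta> ^ n)" by (rule convergent_imp_Bseq[OF convergentI])
  then obtain B where B: "B > 0" "\<And>n. norm (x n / real \<delta> ^ n) \<le> B" by (rule BseqE) blast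
  have u_le: "u n \<le> - (real \<delta> ^ n)" for n
    using ln_max_le_neg_power[OF Zp c(2,3,4) \<delta>2 Z2 W[unfolded M_def] small1[unfolded M_def]
        small0[unfolded M_def]]
    unfolding u_def M_def .
  define G where "G = \<alpha> * B + 1"
  have G: "G \<ge> 1" unfolding G_def using B c by simp
  have V_le: "ln (M n) - \<alpha> * ln (Zs n) \<le> - G * ln (M n)" for n
  proof -
    have "\<bar>x n / real \<delta> ^ n\<bar> \<le> B" using B(2)[of n] by simp
    then have "- B \<le> x n / real \<delta> ^ n" by linarith
    then have "- B * real \<delta> ^ n \<le> x n" using dpos by (simp add: field_simps)
    then have "\<alpha> * (- B * real \<delta> ^ n) \<le> \<alpha> * x n" using c(4) by (intro mult_left_mono) auto
    then have "- (\<alpha> * B * real \<delta> ^ n) \<le> \<alpha> * x n" by (simp add: algebra_simps)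
    moreover have "\<alpha> * B * u n \<le> \<alpha> * B * (- (real \<delta> ^ n))" using u_le[of n] B c(4) by (intro mult_left_mono) auto
    then have "\<alpha> * B * u n \<le> - (\<alpha> * B * real \<delta> ^ n)" by simp
    moreover have "u n \<le> 0" using u_le[of n] dpos by (smt (verit) zero_less_power)
    ultimately have "u n - \<alpha> * x n \<le> - (\<alpha> * B * u n) - u n" by linarith
    also have "\<dots> = - G * u n" unfolding G_def by (simp add: algebra_simps)
    finally have "u n - \<alpha> * x n \<le> - G * u n" .
    then show ?thesis unfolding u_def x_def .
  qed
  define \<rho> where "\<rho> = max (1 - 1 / (\<alpha> * real \<delta>)) (1 - 1 / (real \<delta> * G))"
  define \<kappa> where "\<kappa> = ln (2 * K + 1) + \<alpha> * \<bar>ln c1\<bar>"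
  have \<rho>: "0 \<le> \<rho>" "\<rho> < 1"
  proof -
    have "1 * 1 \<le> real \<delta> * G" using d1 G by (intro mult_mono) auto
    then show "0 \<le> \<rho>" unfolding \<rho>_def by (simp add: le_max_iff_disj)
    show "\<rho> < 1" unfolding \<rho>_def using c(4) dpos G by simp
  qed
  have V_step: "V (Suc n) \<le> \<kappa> + real \<delta> * \<rho> * V n" for n
  proof -
    have M_Suc: "M (Suc n) = max (Zs (Suc n) powr \<alpha>) (Ws (Suc n))" unfolding M_def ..
    have "1 \<le> \<delta>" using \<delta>2 by simp
    from ln_max_contraction_step[OF c(4) this G c(3) c(1) Zp[of n] Zp[of "Suc n"] Wn[of "Suc n"]
        ZaM[of n] Z1[of n] W[of n] V_le[of n]]
    show ?thesis unfolding V_def u_def x_def \<rho>_def \<kappa>_def M_Suc .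
  qed
  have "V n \<ge> 0" for n
  proof -
    have "ln (Zs n powr \<alpha>) \<le> ln (M n)" using ZaM[of n] Zp[of n] Mp[of n] by (subst ln_le_cancel_iff) auto
    then show ?thesis unfolding V_def u_def x_def using Zp[of n] by (simp add: ln_powr)
  qed
  then have "(\<lambda>n. V n / real \<delta> ^ n) \<longlonglongrightarrow> 0"
    by (rule div_power_tendsto_zero_of_recurrence[where V = V, OF d1 \<rho> _ V_step])
  then have "(\<lambda>n. V n / real \<delta> ^ n + \<alpha> * (x n / real \<delta> ^ n)) \<longlonglongrightarrow> 0 + \<alpha> * g"
    by (intro tendsto_add tendsto_mult x_lim tendsto_const)
  moreover have "V n / real \<delta> ^ n + \<alpha> * (x n / real \<delta> ^ n) = ln (M n) / real \<delta> ^ n" for n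
    unfolding V_def u_def using dpos by (simp add: field_simps)
  ultimately have "(\<lambda>n. ln (M n) / real \<delta> ^ n) \<longlonglongrightarrow> \<alpha> * g" by simp
  then have "green_seq \<delta> M \<longlonglongrightarrow> ereal (\<alpha> * g)" by (rule green_seq_tendsto_ereal[OF Mp \<open>\<delta> > 0\<close>])
  moreover have "green_seq \<delta> Zs \<longlonglongrightarrow> ereal g"
    by (rule green_seq_tendsto_ereal[OF Zp \<open>\<delta> > 0\<close>]) (use x_lim in \<open>simp add: x_def\<close>)
  ultimately show ?thesis by blast
qed


lemma green_limits_max_orbit:
  fixes Zs Ws :: "nat \<Rightarrow> real" and \<delta> :: nat and \<alpha> c1 c2 K :: real
  defines "M \<equiv> \<lambda>n. max (Zs n powr \<alpha>) (Ws n)"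
  assumes Zn: "\<And>n. Zs n \<ge> 0" and Wn: "\<And>n. Ws n \<ge> 0"
    and c: "c1 > 0" "c2 > 0" "K \<ge> 0" "\<alpha> > 0" and \<delta>2: "\<delta> \<ge> 2"
    and Z1: "\<And>n. c1 * Zs n ^ \<delta> \<le> Zs (Suc n)" and Z2: "\<And>n. Zs (Suc n) \<le> c2 * Zs n ^ \<delta>"
    and W: "\<And>n. M n > 0 \<Longrightarrow> Ws (Suc n) \<le> K * (Zs n * M n powr (real \<delta> - 1/\<alpha>) + M n powr (real \<delta> + 1))"
    and W0: "\<And>n. M n = 0 \<Longrightarrow> Ws (Suc n) = 0"
    and small1: "\<And>n. M n \<le> 1"
    and small0: "M 0 \<le> exp (- ln (2 * K + c2 powr \<alpha> + 1) - 1)"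
  shows "\<exists>G. green_seq \<delta> Zs \<longlonglongrightarrow> G \<and> green_seq \<delta> M \<longlonglongrightarrow> ereal \<alpha> * G"
proof (cases "Zs 0 = 0")
  case True
  have Z0: "Zs n = 0" for n
  proof (induction n)
    case (Suc n)
    have "Zs (Suc n) \<le> c2 * Zs n ^ \<delta>" by (rule Z2)
    also have "\<dots> = 0" using Suc \<delta>2 by (simp add: zero_power)
    finally show ?case using Zn[of "Suc n"] by simp
  qed (use True in simp)
  then have M_eq: "M n = Ws n" for n unfolding M_def using Wn[of n] by simp
  have "green_seq \<delta> M \<longlonglongrightarrow> -\<infinity>"
  proof (rule green_seq_tendsto_minf_of_superlinear[where W = M and K = K, OF \<delta>2 _ _ _ _ _ small0])
    show "K \<le> 2 * K + c2 powr \<alpha> + 1" "1 \<le> 2 * K + c2 powr \<alpha> + 1" using c by simp_all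
    show "M (Suc n) \<le> K * M n powr (real \<delta> + 1)" if "M n > 0" for n
      using W[OF that] Z0 M_eq by simp
    show "M (Suc n) = 0" if "M n = 0" for n using W0[OF that] M_eq by simp
  qed (simp add: M_eq Wn)
  moreover have "green_seq \<delta> Zs = (\<lambda>_. -\<infinity>)" using Z0 \<delta>2 by (intro ext green_seq_zero) auto
  ultimately show ?thesis using c(4) by (intro exI[of _ "-\<infinity>"]) simp
next
  case False
  have Zp: "Zs n > 0" for n
  proof (induction n)
    case (Suc n)
    then have "c1 * Zs n ^ \<delta> > 0" using c(1) by simp
    then show ?case using Z1[of n] by linarith
  qed (use False Zn[of 0] in simp)
  have "M n > 0" for n unfolding M_def using Zp[of n] by (simp add: less_max_iff_disj)
  then have "Ws (Suc n) \<le> K * (Zs n * M n powr (real \<delta> - 1/\<alpha>) + M n powr (real \<delta> + 1))" for n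
    using W by blast
  from green_limits_max_recurrence[OF Zp Wn c \<delta>2 Z1 Z2 this[unfolded M_def]
      small1[unfolded M_def] small0[unfolded M_def]]
  obtain g where "green_seq \<delta> Zs \<longlonglongrightarrow> ereal g" "green_seq \<delta> M \<longlonglongrightarrow> ereal (\<alpha> * g)"
    unfolding M_def by blast
  then show ?thesis by (intro exI[of _ "ereal g"]) simp
qed

lemma green_seq_shift_pair:
  assumes "\<delta> > 0"
    and u: "green_seq \<delta> (\<lambda>j. u (j + N)) \<longlonglongrightarrow> G" and v: "green_seq \<delta> (\<lambda>j. v (j + N)) \<longlonglongrightarrow> ereal \<alpha> * G"
  shows "\<exists>g. green_seq \<delta> u \<longlonglongrightarrow> g \<and> green_seq \<delta> v \<longlonglongrightarrow> ereal \<alpha> * g"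
proof -
  have "green_seq \<delta> v \<longlonglongrightarrow> ereal (1 / real \<delta> ^ N) * (ereal \<alpha> * G)"
    by (rule green_seq_shift[OF assms(1) v])
  moreover have "ereal (1 / real \<delta> ^ N) * (ereal \<alpha> * G) = ereal \<alpha> * (ereal (1 / real \<delta> ^ N) * G)"
    by (rule mult.left_commute)
  ultimately have "green_seq \<delta> v \<longlonglongrightarrow> ereal \<alpha> * (ereal (1 / real \<delta> ^ N) * G)" by simp
  moreover have "green_seq \<delta> u \<longlonglongrightarrow> ereal (1 / real \<delta> ^ N) * G"
    by (rule green_seq_shift[OF assms(1) u])
  ultimately show ?thesis by blast
qed

section \<open>Estimates for the power series of q\<close>

lemma summable_on_norm_double_power_series:
  assumes ser: "\<forall>z w. cmod z < \<epsilon> \<and> cmod w < \<epsilon> \<longrightarrow> ((\<lambda>(i, j). b i j * z ^ i * w ^ j) has_sum q z w) UNIV"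
    and \<rho>: "0 < \<rho>" "\<rho> < \<epsilon>"
  shows "(\<lambda>(i, j). cmod (b i j) * \<rho> ^ (i + j)) summable_on UNIV"
proof -
  have "((\<lambda>(i, j). b i j * complex_of_real \<rho> ^ i * complex_of_real \<rho> ^ j) has_sum q \<rho> \<rho>) UNIV"
    using ser \<rho> by auto
  then have "(\<lambda>(i, j). b i j * complex_of_real \<rho> ^ i * complex_of_real \<rho> ^ j) summable_on UNIV"
    unfolding summable_on_def by blast
  then have "(\<lambda>x. norm ((\<lambda>(i, j). b i j * complex_of_real \<rho> ^ i * complex_of_real \<rho> ^ j) x)) summable_on UNIV"
    by (simp add: summable_on_iff_abs_summable_on_complex)
  moreover have "norm ((\<lambda>(i, j). b i j * complex_of_real \<rho> ^ i * complex_of_real \<rho> ^ j) x) = (\<lambda>(i, j). cmod (b i j) * \<rho> ^ (i + j)) x" for x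
    using \<rho> by (cases x) (simp add: norm_mult norm_power power_add)
  ultimately show ?thesis by simp
qed

lemma norm_has_sum_le_scaled:
  fixes F :: "nat \<times> nat \<Rightarrow> complex" and g :: "nat \<times> nat \<Rightarrow> real"
  assumes F: "(F has_sum Q) UNIV" and g: "g summable_on UNIV" and b: "\<And>x. norm (F x) \<le> W * g x"
  shows "norm Q \<le> W * infsum g UNIV"
proof -
  have "((\<lambda>x. W * g x) has_sum W * infsum g UNIV) UNIV" using g by (intro has_sum_cmult_right) auto
  then show ?thesis using norm_infsum_le[OF F] b by blast
qed

lemma norm_double_series_le:
  fixes b :: "nat \<Rightarrow> nat \<Rightarrow> complex" and z w Q :: complex and E :: "(nat \<times> nat) set"
  assumes F: "((\<lambda>x. if x \<in> E then 0 else (\<lambda>(i, j). b i j * z ^ i * w ^ j) x) has_sum Q) UNIV"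
    and sm: "(\<lambda>(i, j). cmod (b i j) * \<rho> ^ (i + j)) summable_on UNIV" and W: "W \<ge> 0" and \<rho>: "\<rho> \<ge> 0"
    and bound: "\<And>i j. b i j \<noteq> 0 \<Longrightarrow> (i, j) \<notin> E \<Longrightarrow> cmod z ^ i * cmod w ^ j \<le> W * \<rho> ^ (i + j)"
  shows "cmod Q \<le> W * infsum (\<lambda>(i, j). cmod (b i j) * \<rho> ^ (i + j)) UNIV"
proof (rule norm_has_sum_le_scaled[OF F sm])
  fix x :: "nat \<times> nat"
  obtain i j where x: "x = (i, j)" by (cases x)
  show "norm (if x \<in> E then 0 else (\<lambda>(i, j). b i j * z ^ i * w ^ j) x)
      \<le> W * (\<lambda>(i, j). cmod (b i j) * \<rho> ^ (i + j)) x"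
  proof (cases "x \<in> E \<or> b i j = 0")
    case True
    then show ?thesis using x W \<rho> by auto
  next
    case False
    then have "cmod (b i j) * (cmod z ^ i * cmod w ^ j) \<le> cmod (b i j) * (W * \<rho> ^ (i + j))"
      using bound x by (intro mult_left_mono) auto
    then show ?thesis using x False by (simp add: norm_mult norm_power mult_ac)
  qed
qed

lemma has_sum_remove_point:
  fixes F :: "'a \<Rightarrow> complex"
  assumes F: "(F has_sum Q) UNIV"
  shows "((\<lambda>x. if x = x0 then 0 else F x) has_sum (Q - F x0)) UNIV"
proof -
  have "((\<lambda>x. if x = x0 then - F x0 else 0) has_sum (- F x0)) UNIV"
    by (rule has_sum_finite_neutralI[of "{x0}"]) auto
  from has_sum_add[OF F this] have "((\<lambda>x. F x + (if x = x0 then - F x0 else 0)) has_sum (Q + - F x0)) UNIV" .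
  moreover have "(\<lambda>x. F x + (if x = x0 then - F x0 else 0)) = (\<lambda>x. if x = x0 then 0 else F x)" by auto
  ultimately show ?thesis by simp
qed

lemma ratio_mult_le:
  fixes E k C x :: real
  assumes "k > 0" "C \<ge> 0" "E \<ge> k" "E \<ge> x - C" "x \<ge> 0"
  shows "E \<ge> k / (k + C) * x"
proof (cases "x \<le> k + C")
  case True
  have "k / (k + C) * x \<le> k / (k + C) * (k + C)" using True assms by (intro mult_left_mono) auto
  also have "\<dots> = k" using assms by simp
  finally show ?thesis using assms by simp
next
  case False
  have "k / (k + C) * x = x - C / (k + C) * x" using assms by (simp add: field_simps)
  also have "C / (k + C) * x \<ge> C / (k + C) * (k + C)" using False assms by (intro mult_left_mono) auto
  then have "x - C / (k + C) * x \<le> x - C" using assms by simp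
  finally show ?thesis using assms by simp
qed

text \<open>Off the vertex \<open>(\<gamma>, d)\<close> the support lies on the far side of one of the two edge lines
  through it; in the log coordinates of \<open>U\<close> this gains a factor \<open>r\<close> to a power that grows with
  \<open>i + j\<close>, which makes the remaining part of the series negligible.\<close>

lemma ln_monomial_gap_exponent:
  fixes X Y R l1 l2 :: real and i j \<gamma> d :: nat
  defines "k \<equiv> min 1 l2" and "C \<equiv> real \<gamma> + (l1 + 1) * real d"
  assumes R: "X \<le> R" and l: "l1 > 0" "l2 > 0"
    and U1: "(l1 + l2) * X < l2 * R + Y" and U2: "Y < R + l1 * X"
    and NP1: "real i + l1 * real j \<ge> real \<gamma> + l1 * real d"
    and NP2: "real i + (l1 + l2) * real j \<ge> real \<gamma> + (l1 + l2) * real d"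
    and ne: "(i, j) \<noteq> (\<gamma>, d)"
  shows "\<exists>E. E \<ge> k \<and> E \<ge> real (i + j) - C \<and> real i * X + real j * Y \<le> real \<gamma> * X + real d * Y + E * R"
proof -
  have k: "k > 0" "k \<le> 1" "k \<le> l2" unfolding k_def using l by auto
  show ?thesis
  proof (cases "j > d")
    case True
    define t where "t = real j - real d"
    have t: "t \<ge> 1" unfolding t_def using True by linarith
    define A where "A = real i - real \<gamma> + l1 * t"
    have A: "A \<ge> 0" unfolding A_def t_def using NP1 by (simp add: algebra_simps)
    have "t * Y \<le> t * (R + l1 * X)" using U2 t by (intro mult_left_mono) auto
    moreover have "A * X \<le> A * R" using A R by (intro mult_left_mono) auto
    ultimately have "real i * X + real j * Y \<le> real \<gamma> * X + real d * Y + (A + t) * R"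
      unfolding A_def t_def by (simp add: algebra_simps)
    moreover have "A + t \<ge> k" using A t k by linarith
    moreover have "A + t \<ge> real (i + j) - C"
    proof -
      have "l1 * real j \<ge> 0" using l by simp
      then show ?thesis unfolding A_def t_def C_def by (simp add: algebra_simps)
    qed
    ultimately show ?thesis by blast
  next
    case False
    show ?thesis
    proof (cases "j < d")
      case True
      define t where "t = real d - real j"
      have t: "t \<ge> 1" unfolding t_def using True by linarith
      define A where "A = real i - real \<gamma> - (l1 + l2) * t"
      have A: "A \<ge> 0" unfolding A_def t_def using NP2 by (simp add: algebra_simps)
      have "t * ((l1 + l2) * X - l2 * R) \<le> t * Y" using U1 t by (intro mult_left_mono) auto
      moreover have "A * X \<le> A * R" using A R by (intro mult_left_mono) auto
      ultimately have "real i * X + real j * Y \<le> real \<gamma> * X + real d * Y + (A + t * l2) * R"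
        unfolding A_def t_def by (simp add: algebra_simps)
      moreover have "A + t * l2 \<ge> k"
      proof -
        have "t * l2 \<ge> 1 * l2" using t l by (intro mult_right_mono) auto
        then show ?thesis using A k by linarith
      qed
      moreover have "A + t * l2 \<ge> real (i + j) - C"
      proof -
        have "A + t * l2 = real i - real \<gamma> - l1 * t" unfolding A_def by (simp add: algebra_simps)
        moreover have "l1 * t \<le> l1 * real d" unfolding t_def using l by (intro mult_left_mono) auto
        moreover have "real j \<le> real d" using True by simp
        ultimately show ?thesis unfolding C_def by (simp add: algebra_simps)
      qed
      ultimately show ?thesis by blast
    next
      case False
      then have jd: "j = d" using \<open>\<not> j > d\<close> by simp
      then have "i \<noteq> \<gamma>" using ne by auto
      moreover have "real i \<ge> real \<gamma>" using NP1 jd by simp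
      ultimately have t: "real i - real \<gamma> \<ge> 1" by linarith
      have "(real i - real \<gamma>) * X \<le> (real i - real \<gamma>) * R" using t R by (intro mult_left_mono) auto
      then have "real i * X + real j * Y \<le> real \<gamma> * X + real d * Y + (real i - real \<gamma>) * R"
        using jd by (simp add: algebra_simps)
      moreover have "real i - real \<gamma> \<ge> k" using t k by linarith
      moreover have "real i - real \<gamma> \<ge> real (i + j) - C"
      proof -
        have "l1 * real d \<ge> 0" using l by simp
        then show ?thesis unfolding C_def using jd by (simp add: algebra_simps)
      qed
      ultimately show ?thesis by blast
    qed
  qed
qed

lemma ln_monomial_gap:
  fixes X Y R l1 l2 :: real and i j \<gamma> d :: nat
  assumes R: "R < 0" "X \<le> R" and l: "l1 > 0" "l2 > 0"
    and U1: "(l1 + l2) * X < l2 * R + Y" and U2: "Y < R + l1 * X"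
    and NP1: "real i + l1 * real j \<ge> real \<gamma> + l1 * real d"
    and NP2: "real i + (l1 + l2) * real j \<ge> real \<gamma> + (l1 + l2) * real d"
    and ne: "(i, j) \<noteq> (\<gamma>, d)"
  shows "real i * X + real j * Y \<le> real \<gamma> * X + real d * Y + (min 1 l2 / 2) * R
           + real (i + j) * ((min 1 l2 / (min 1 l2 + (real \<gamma> + (l1 + 1) * real d))) / 2) * R"
proof -
  define k where "k = min 1 l2"
  define C where "C = real \<gamma> + (l1 + 1) * real d"
  have k: "k > 0" unfolding k_def using l by auto
  have C: "C \<ge> 0" unfolding C_def using l by auto
  obtain E where E: "E \<ge> k" "E \<ge> real (i + j) - C"
    and b: "real i * X + real j * Y \<le> real \<gamma> * X + real d * Y + E * R"
    using ln_monomial_gap_exponent[OF R(2) l U1 U2 NP1 NP2 ne] unfolding k_def C_def by blast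
  define y where "y = k / (k + C) * real (i + j)"
  have Ey: "E \<ge> y" unfolding y_def by (rule ratio_mult_le[OF k(1) C E]) simp
  have eq: "real (i + j) * (k / (k + C) / 2) = y / 2" unfolding y_def by simp
  have "E \<ge> k / 2 + y / 2" using Ey E(1) by linarith
  then have "E \<ge> k / 2 + real (i + j) * (k / (k + C) / 2)" unfolding eq .
  then have "E * R \<le> (k / 2 + real (i + j) * (k / (k + C) / 2)) * R" using R by (intro mult_right_mono_neg) auto
  then show ?thesis using b unfolding k_def[symmetric] C_def[symmetric] by (simp add: algebra_simps)
qed

lemma monomial_gap:
  fixes Z W r l1 l2 :: real and i j \<gamma> d :: nat
  assumes Z: "Z > 0" and W: "W > 0" and r: "0 < r" "r < 1" "Z \<le> r" and l: "l1 > 0" "l2 > 0"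
    and U1: "(l1 + l2) * ln Z < l2 * ln r + ln W" and U2: "ln W < ln r + l1 * ln Z"
    and NP1: "real i + l1 * real j \<ge> real \<gamma> + l1 * real d"
    and NP2: "real i + (l1 + l2) * real j \<ge> real \<gamma> + (l1 + l2) * real d"
    and ne: "(i, j) \<noteq> (\<gamma>, d)"
  shows "Z ^ i * W ^ j \<le> Z ^ \<gamma> * W ^ d * r powr (min 1 l2 / 2)
           * (r powr ((min 1 l2 / (min 1 l2 + (real \<gamma> + (l1 + 1) * real d))) / 2)) ^ (i + j)"
proof -
  define k where "k = min 1 l2 / 2"
  define c where "c = (min 1 l2 / (min 1 l2 + (real \<gamma> + (l1 + 1) * real d))) / 2"
  have R: "ln r < 0" using r by simp
  have X: "ln Z \<le> ln r" using r Z by simp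
  have b: "real i * ln Z + real j * ln W \<le> real \<gamma> * ln Z + real d * ln W + k * ln r + real (i + j) * c * ln r"
    using ln_monomial_gap[OF R X l U1 U2 NP1 NP2 ne] unfolding k_def c_def by simp
  have "Z ^ i * W ^ j = exp (real i * ln Z + real j * ln W)"
    using Z W by (simp add: exp_add exp_of_nat_mult)
  also have "\<dots> \<le> exp (real \<gamma> * ln Z + real d * ln W + k * ln r + real (i + j) * c * ln r)"
    using b by simp
  also have "\<dots> = Z ^ \<gamma> * W ^ d * r powr k * (r powr c) ^ (i + j)"
  proof -
    have e1: "exp (real \<gamma> * ln Z) = Z ^ \<gamma>" using Z by (simp add: exp_of_nat_mult)
    have e2: "exp (real d * ln W) = W ^ d" using W by (simp add: exp_of_nat_mult)
    have e3: "exp (k * ln r) = r powr k" using r by (simp add: powr_def)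
    have "exp (real (i + j) * (c * ln r)) = exp (c * ln r) ^ (i + j)" by (rule exp_of_nat_mult)
    then have e4: "exp (real (i + j) * c * ln r) = (r powr c) ^ (i + j)" using r by (simp add: powr_def mult.assoc)
    show ?thesis by (simp only: exp_add e1 e2 e3 e4)
  qed
  finally show ?thesis unfolding k_def c_def .
qed


lemma monomial_le_max_powr_mixed:
  fixes Z W \<alpha> M M0 :: real and i j \<delta> :: nat
  defines "\<theta> \<equiv> min (1/\<alpha>) 1"
  assumes \<alpha>: "\<alpha> > 0" and ZW: "Z \<ge> 0" "W \<ge> 0"
    and M: "Z powr \<alpha> \<le> M" "W \<le> M" "0 < M" "M \<le> M0" "M0 \<le> 1"
    and ij: "1 \<le> i" "real \<delta> \<le> real i / \<alpha> + real j"
  shows "Z ^ i * W ^ j \<le> M0 powr (- real \<delta>) * (M0 powr \<theta>) ^ (i + j) * (Z * M powr (real \<delta> - 1/\<alpha>))"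
proof -
  define e where "e = real i / \<alpha> + real j - real \<delta>"
  have e: "e \<ge> 0" unfolding e_def using ij by simp
  have M0: "M0 > 0" using M by linarith
  have ZM: "Z \<le> M powr (1/\<alpha>)" using ZW \<alpha> M(1) by (intro le_root_of_powr_le) auto
  obtain i' where i': "i = Suc i'" using ij(1) by (cases i) auto
  have "Z ^ i * W ^ j = Z * (Z ^ (i - 1) * W ^ j)" unfolding i' by simp
  also have "\<dots> \<le> Z * ((M powr (1/\<alpha>)) ^ (i - 1) * M ^ j)"
    using ZM M ZW by (intro mult_left_mono mult_mono power_mono) auto
  also have "(M powr (1/\<alpha>)) ^ (i - 1) * M ^ j = M powr (real \<delta> - 1/\<alpha>) * M powr e"
  proof -
    have eq1: "(M powr (1/\<alpha>)) ^ (i - 1) = M powr (real (i - 1) * (1/\<alpha>))"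
      by (rule powr_power) (use M(3) in auto)
    have eq2: "M ^ j = M powr real j" using M(3) by (simp add: powr_realpow)
    have eq3: "real (i - 1) * (1/\<alpha>) + real j = (real \<delta> - 1/\<alpha>) + e"
      unfolding e_def i' using \<alpha> by (simp add: field_simps)
    show ?thesis unfolding eq1 eq2 powr_add[symmetric] eq3 ..
  qed
  also have "M powr e \<le> M0 powr e" using M e by (intro powr_mono2) auto
  also have "M0 powr e \<le> M0 powr (real (i + j) * \<theta> - real \<delta>)"
  proof -
    have "real i * \<theta> \<le> real i * (1/\<alpha>)" unfolding \<theta>_def by (intro mult_left_mono) auto
    moreover have "real j * \<theta> \<le> real j * 1" unfolding \<theta>_def by (intro mult_left_mono) auto
    ultimately have "real (i + j) * \<theta> - real \<delta> \<le> e" unfolding e_def by (simp add: algebra_simps)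
    then show ?thesis using M M0 by (intro powr_mono') auto
  qed
  also have "\<dots> = M0 powr (- real \<delta> + real (i + j) * \<theta>)" by (simp add: algebra_simps)
  also have "\<dots> = M0 powr (- real \<delta>) * (M0 powr \<theta>) ^ (i + j)"
    unfolding powr_power[of M0, OF M0[THEN less_imp_neq, symmetric]] powr_add[symmetric] ..
  finally have "Z ^ i * W ^ j \<le> Z * (M powr (real \<delta> - 1/\<alpha>) * (M0 powr (- real \<delta>) * (M0 powr \<theta>) ^ (i + j)))"
    using ZW by (simp add: mult_left_mono)
  then show ?thesis by (simp only: mult_ac)
qed

lemma monomial_le_max_powr_pure:
  fixes W \<theta> M M0 :: real and j \<delta> :: nat
  assumes W: "W \<ge> 0" "W \<le> M" and M: "0 < M" "M \<le> M0" "M0 \<le> 1"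
    and \<theta>: "0 < \<theta>" "\<theta> \<le> 1" and j: "\<delta> + 1 \<le> j"
  shows "W ^ j \<le> M0 powr (- (real \<delta> + 1)) * (M0 powr \<theta>) ^ j * M powr (real \<delta> + 1)"
proof -
  have M0: "M0 > 0" using M by linarith
  have "M powr (real j - (real \<delta> + 1)) \<le> M0 powr (real j - (real \<delta> + 1))"
    using j M by (intro powr_mono2) auto
  also have "\<dots> \<le> M0 powr (real j * \<theta> - (real \<delta> + 1))"
  proof -
    have "real j * \<theta> \<le> real j * 1" using \<theta> by (intro mult_left_mono) auto
    then show ?thesis using M M0 by (intro powr_mono') auto
  qed
  also have "\<dots> = M0 powr (- (real \<delta> + 1) + real j * \<theta>)" by (simp add: algebra_simps)
  also have "\<dots> = M0 powr (- (real \<delta> + 1)) * (M0 powr \<theta>) ^ j"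
    unfolding powr_power[of M0, OF M0[THEN less_imp_neq, symmetric]] powr_add[symmetric] ..
  finally have *: "M powr (real j - (real \<delta> + 1)) \<le> M0 powr (- (real \<delta> + 1)) * (M0 powr \<theta>) ^ j" .
  have "W ^ j \<le> M ^ j" using W by (simp add: power_mono)
  also have "\<dots> = M powr (real j - (real \<delta> + 1)) * M powr (real \<delta> + 1)"
    using M by (simp add: powr_add[symmetric] powr_realpow[symmetric])
  also have "\<dots> \<le> M0 powr (- (real \<delta> + 1)) * (M0 powr \<theta>) ^ j * M powr (real \<delta> + 1)"
    using * by (rule mult_right_mono) simp
  finally show ?thesis .
qed

lemma monomial_le_max_powr:
  fixes Z W \<alpha> M M0 :: real and i j \<delta> :: nat
  assumes \<alpha>: "\<alpha> > 0" and ZW: "Z \<ge> 0" "W \<ge> 0"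
    and M: "M = max (Z powr \<alpha>) W" "0 < M" "M \<le> M0" "M0 \<le> 1"
    and ij: "(1 \<le> i \<and> real \<delta> \<le> real i / \<alpha> + real j) \<or> (i = 0 \<and> \<delta> + 1 \<le> j)"
  shows "Z ^ i * W ^ j \<le> M0 powr (- (real \<delta> + 1)) * (M0 powr (min (1/\<alpha>) 1)) ^ (i + j)
           * (Z * M powr (real \<delta> - 1/\<alpha>) + M powr (real \<delta> + 1))"
proof -
  define C where "C = M0 powr (- (real \<delta> + 1)) * (M0 powr (min (1/\<alpha>) 1)) ^ (i + j)"
  have C: "C \<ge> 0" unfolding C_def by simp
  have P: "Z * M powr (real \<delta> - 1/\<alpha>) \<ge> 0" "M powr (real \<delta> + 1) \<ge> 0" using ZW by simp_all
  have ZWM: "Z powr \<alpha> \<le> M" "W \<le> M" using M(1) by simp_all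
  have "Z ^ i * W ^ j \<le> C * (Z * M powr (real \<delta> - 1/\<alpha>)) \<or> Z ^ i * W ^ j \<le> C * M powr (real \<delta> + 1)"
    using ij
  proof
    assume i: "1 \<le> i \<and> real \<delta> \<le> real i / \<alpha> + real j"
    have "M0 powr (- real \<delta>) \<le> M0 powr (- (real \<delta> + 1))" using M by (intro powr_mono') auto
    then have "M0 powr (- real \<delta>) * (M0 powr min (1/\<alpha>) 1) ^ (i + j) \<le> C"
      unfolding C_def by (intro mult_right_mono) auto
    then have "M0 powr (- real \<delta>) * (M0 powr min (1/\<alpha>) 1) ^ (i + j) * (Z * M powr (real \<delta> - 1/\<alpha>))
        \<le> C * (Z * M powr (real \<delta> - 1/\<alpha>))"
      using P(1) by (rule mult_right_mono)
    then show ?thesis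
      using monomial_le_max_powr_mixed[OF \<alpha> ZW ZWM M(2-4)] i by fastforce
  next
    assume j: "i = 0 \<and> \<delta> + 1 \<le> j"
    have "W ^ j \<le> C * M powr (real \<delta> + 1)"
      using monomial_le_max_powr_pure[OF ZW(2) ZWM(2) M(2-4), of "min (1/\<alpha>) 1"] \<alpha> j
      unfolding C_def by simp
    then show ?thesis using j by simp
  qed
  moreover have "C * (Z * M powr (real \<delta> - 1/\<alpha>)) \<le> C * (Z * M powr (real \<delta> - 1/\<alpha>) + M powr (real \<delta> + 1))"
    "C * M powr (real \<delta> + 1) \<le> C * (Z * M powr (real \<delta> - 1/\<alpha>) + M powr (real \<delta> + 1))"
    using C P by (simp_all add: mult_left_mono)
  ultimately show ?thesis unfolding C_def by linarith
qed


section \<open>The skew product in Case 4\<close>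

lemma Uset_iff_ln:
  fixes \<zeta> \<omega> :: complex and r l1 l2 :: real
  assumes r: "0 < r" and l: "l1 > 0" "l2 > 0"
  shows "(\<zeta>, \<omega>) \<in> Uset l1 l2 r \<longleftrightarrow> cmod \<zeta> > 0 \<and> cmod \<omega> > 0 \<and>
     (l1 + l2) * ln (cmod \<zeta>) < l2 * ln r + ln (cmod \<omega>) \<and> ln (cmod \<omega>) < ln r + l1 * ln (cmod \<zeta>)"
proof
  assume U: "(\<zeta>, \<omega>) \<in> Uset l1 l2 r"
  then have u1: "cmod \<zeta> powr (l1 + l2) < r powr l2 * cmod \<omega>" and u2: "cmod \<omega> < r * cmod \<zeta> powr l1"
    unfolding Uset_def by auto
  have "r powr l2 * cmod \<omega> > 0" using u1 by (smt (verit) powr_ge_zero)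
  then have W: "cmod \<omega> > 0" using r by (simp add: zero_less_mult_iff)
  have "r * cmod \<zeta> powr l1 > 0" using u2 by (smt (verit) norm_ge_zero)
  then have Z: "cmod \<zeta> > 0" using r by (simp add: zero_less_mult_iff)
  have "ln (cmod \<zeta> powr (l1 + l2)) < ln (r powr l2 * cmod \<omega>)" using u1 Z W r by (subst ln_less_cancel_iff) auto
  then have "(l1 + l2) * ln (cmod \<zeta>) < l2 * ln r + ln (cmod \<omega>)" using Z W r by (simp add: ln_mult ln_powr)
  moreover have "ln (cmod \<omega>) < ln (r * cmod \<zeta> powr l1)" using u2 Z W r by (subst ln_less_cancel_iff) auto
  then have "ln (cmod \<omega>) < ln r + l1 * ln (cmod \<zeta>)" using Z W r by (simp add: ln_mult ln_powr)
  ultimately show "cmod \<zeta> > 0 \<and> cmod \<omega> > 0 \<and>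
     (l1 + l2) * ln (cmod \<zeta>) < l2 * ln r + ln (cmod \<omega>) \<and> ln (cmod \<omega>) < ln r + l1 * ln (cmod \<zeta>)"
    using Z W by auto
next
  assume h: "cmod \<zeta> > 0 \<and> cmod \<omega> > 0 \<and>
     (l1 + l2) * ln (cmod \<zeta>) < l2 * ln r + ln (cmod \<omega>) \<and> ln (cmod \<omega>) < ln r + l1 * ln (cmod \<zeta>)"
  then have Z: "cmod \<zeta> > 0" and W: "cmod \<omega> > 0" by auto
  have "ln (cmod \<zeta> powr (l1 + l2)) < ln (r powr l2 * cmod \<omega>)" using h Z W r by (simp add: ln_mult ln_powr)
  then have u1: "cmod \<zeta> powr (l1 + l2) < r powr l2 * cmod \<omega>" using Z W r by (subst (asm) ln_less_cancel_iff) auto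
  have "ln (cmod \<omega>) < ln (r * cmod \<zeta> powr l1)" using h Z W r by (simp add: ln_mult ln_powr)
  then have u2: "cmod \<omega> < r * cmod \<zeta> powr l1" using Z W r by (subst (asm) ln_less_cancel_iff) auto
  show "(\<zeta>, \<omega>) \<in> Uset l1 l2 r" unfolding Uset_def using u1 u2 by auto
qed

lemma mult_ln_le_of_le_exp:
  fixes r E C :: real
  assumes "0 < r" "0 < E" "r \<le> exp (- C / E)"
  shows "E * ln r \<le> - C"
proof -
  have "ln r \<le> - C / E" using assms by (metis ln_exp ln_le_cancel_iff exp_gt_zero)
  then have "E * ln r \<le> E * (- C / E)" using assms(2) by (intro mult_left_mono) auto
  then show ?thesis using assms(2) by simp
qed

text \<open>In logarithmic coordinates one step of \<open>f\<close> maps \<open>X = ln |z|\<close> to \<open>\<delta> X + O(1)\<close> and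
  \<open>Y = ln |w|\<close> to \<open>\<gamma> X + d Y + O(1)\<close>; the nonnegative slack of the two edge inequalities,
  together with \<open>d - 1\<close>, absorbs the \<open>O(1)\<close> terms once \<open>R = ln r\<close> is negative enough.\<close>

lemma ln_Uset_step:
  fixes X Y R X1 Y1 l1 l2 \<delta> \<gamma> d K1 K2 :: real
  defines "e1 \<equiv> (l1 + l2) * (\<delta> - d) - \<gamma>" and "e2 \<equiv> \<gamma> - l1 * (\<delta> - d)"
  assumes XR: "X < R" and U1: "(l1 + l2) * X < l2 * R + Y" and U2: "Y < R + l1 * X"
    and d: "d \<ge> 1" and l: "l1 > 0" "l2 > 0" and e: "e1 \<ge> 0" "e2 \<ge> 0"
    and X1: "\<bar>X1 - \<delta> * X\<bar> \<le> K1" and Y1: "\<bar>Y1 - (\<gamma> * X + d * Y)\<bar> \<le> K2"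
    and RA: "(e1 + (d - 1) * l2) * R \<le> - ((l1 + l2) * K1 + K2)"
    and RB: "(e2 + (d - 1)) * R \<le> - (l1 * K1 + K2)"
  shows "(l1 + l2) * X1 < l2 * R + Y1 \<and> Y1 < R + l1 * X1"
proof
  have "(l1 + l2) * X1 \<le> (l1 + l2) * (\<delta> * X + K1)" using X1 l by (intro mult_left_mono) auto
  moreover have "d * ((l1 + l2) * X - l2 * R) < d * Y" using U1 d by (intro mult_strict_left_mono) auto
  moreover have "e1 * X \<le> e1 * R" using XR e by (intro mult_left_mono) auto
  moreover have "\<gamma> * X + d * Y - K2 \<le> Y1" using Y1 by linarith
  ultimately show "(l1 + l2) * X1 < l2 * R + Y1" using RA unfolding e1_def by (simp add: algebra_simps)
next
  have "l1 * (\<delta> * X - K1) \<le> l1 * X1" using X1 l by (intro mult_left_mono) auto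
  moreover have "d * Y < d * (R + l1 * X)" using U2 d by (intro mult_strict_left_mono) auto
  moreover have "e2 * X \<le> e2 * R" using XR e by (intro mult_left_mono) auto
  moreover have "Y1 \<le> \<gamma> * X + d * Y + K2" using Y1 by linarith
  ultimately show "Y1 < R + l1 * X1" using RB unfolding e2_def by (simp add: algebra_simps)
qed

lemma skew_iterate_fst_Suc: "fst ((skew p q ^^ Suc j) x) = p (fst ((skew p q ^^ j) x))"
  by (cases "(skew p q ^^ j) x") (simp add: skew_def)

lemma skew_iterate_snd_Suc: "snd ((skew p q ^^ Suc j) x) = q (fst ((skew p q ^^ j) x)) (snd ((skew p q ^^ j) x))"
  by (cases "(skew p q ^^ j) x") (simp add: skew_def)

lemma skew_iterate_fst: "fst ((skew p q ^^ j) x) = (p ^^ j) (fst x)"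
proof (induction j)
  case 0 show ?case by simp
next
  case (Suc j)
  have "fst ((skew p q ^^ Suc j) x) = p (fst ((skew p q ^^ j) x))" by (rule skew_iterate_fst_Suc)
  also have "\<dots> = (p ^^ Suc j) (fst x)" using Suc by simp
  finally show ?case .
qed

lemma basin0_eventually_small:
  assumes x: "x \<in> basin0 Dz f" and "\<alpha> > 0" "\<tau> > 0" "\<epsilon> > 0"
  shows "\<exists>N. \<forall>j\<ge>N. cmod (fst ((f ^^ j) x)) < \<tau> \<and>
           max (cmod (fst ((f ^^ j) x)) powr \<alpha>) (cmod (snd ((f ^^ j) x))) < \<epsilon>"
proof -
  have lim: "(\<lambda>j. (f ^^ j) x) \<longlonglongrightarrow> 0" using x unfolding basin0_def by auto
  have z: "(\<lambda>j. cmod (fst ((f ^^ j) x))) \<longlonglongrightarrow> 0"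
    using tendsto_fst[OF lim] by (simp add: tendsto_norm_zero)
  have w: "(\<lambda>j. cmod (snd ((f ^^ j) x))) \<longlonglongrightarrow> 0"
    using tendsto_snd[OF lim] by (simp add: tendsto_norm_zero)
  have "(\<lambda>j. cmod (fst ((f ^^ j) x)) powr \<alpha>) \<longlonglongrightarrow> 0"
    by (rule tendsto_zero_powrI[OF z tendsto_const]) (use assms in auto)
  then have "(\<lambda>j. max (cmod (fst ((f ^^ j) x)) powr \<alpha>) (cmod (snd ((f ^^ j) x)))) \<longlonglongrightarrow> max 0 0"
    by (intro tendsto_max w)
  then have "\<forall>\<^sub>F j in sequentially. max (cmod (fst ((f ^^ j) x)) powr \<alpha>) (cmod (snd ((f ^^ j) x))) < \<epsilon>"
    using \<open>\<epsilon> > 0\<close> by (intro order_tendstoD) auto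
  moreover have "\<forall>\<^sub>F j in sequentially. cmod (fst ((f ^^ j) x)) < \<tau>"
    using z \<open>\<tau> > 0\<close> by (rule order_tendstoD)
  ultimately have "\<forall>\<^sub>F j in sequentially. max (cmod (fst ((f ^^ j) x)) powr \<alpha>) (cmod (snd ((f ^^ j) x))) < \<epsilon>
      \<and> cmod (fst ((f ^^ j) x)) < \<tau>"
    by (rule eventually_conj)
  then obtain N where "\<And>j. j \<ge> N \<Longrightarrow> max (cmod (fst ((f ^^ j) x)) powr \<alpha>) (cmod (snd ((f ^^ j) x))) < \<epsilon>
      \<and> cmod (fst ((f ^^ j) x)) < \<tau>"
    unfolding eventually_sequentially by blast
  then show ?thesis by blast
qed

locale skew_case4 = newton_vertices b s n m
  for b :: "nat \<Rightarrow> nat \<Rightarrow> complex" and s :: nat and n m :: "nat \<Rightarrow> nat" +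
  fixes p :: "complex \<Rightarrow> complex" and q :: "complex \<Rightarrow> complex \<Rightarrow> complex"
    and a :: complex and \<delta> :: nat and k :: nat and \<alpha> l1 l2 :: real
  assumes a_nz: "a \<noteq> 0" and delta_ge: "\<delta> \<ge> 2"
    and p_expansion: "\<exists>C \<epsilon>. \<epsilon> > 0 \<and>
          (\<forall>z. cmod z < \<epsilon> \<longrightarrow> cmod (p z - a * z ^ \<delta>) \<le> C * cmod z ^ (\<delta> + 1))"
    and q_series_absies: "\<exists>\<epsilon>>0. \<forall>z w. cmod z < \<epsilon> \<and> cmod w < \<epsilon> \<longrightarrow>
          ((\<lambda>(i, j). b i j * z ^ i * w ^ j) has_sum q z w) UNIV"
    and b00: "b 0 0 = 0"
    and case4: "s > 2" "2 \<le> k" "k \<le> s - 1"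
       "intercept n m k \<le> real \<delta>" "real \<delta> \<le> intercept n m (k - 1)"
    and alpha_def: "\<alpha> = real (n k) / (real \<delta> - real (m k))"
    and l1_def: "l1 = (real (n k) - real (n (k - 1))) / (real (m (k - 1)) - real (m k))"
    and l12_def: "l1 + l2 = (real (n (k + 1)) - real (n k)) / (real (m k) - real (m (k + 1)))"
begin

lemma k_bounds: "Suc k \<le> s" "2 \<le> k" using case4 by auto

lemma l1_eq_edge_weight: "l1 = edge_weight (k - 1)"
  unfolding l1_def edge_weight_def using k_bounds by (simp add: Suc_diff_1)

lemma l1_l2_eq_edge_weight: "l1 + l2 = edge_weight k"
  unfolding l12_def edge_weight_def by simp

lemma l1_pos: "l1 > 0" unfolding l1_eq_edge_weight using edge_weight_pos[of "k - 1"] k_bounds by auto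

lemma l2_pos: "l2 > 0"
proof -
  have "edge_weight (k - 1) < edge_weight (Suc (k - 1))" using edge_weight_less_Suc[of "k - 1"] k_bounds by auto
  then show ?thesis using l1_eq_edge_weight l1_l2_eq_edge_weight k_bounds by (simp add: Suc_diff_1)
qed

lemma n_k_pos: "n k > 0" using vertex_n_less[of 1 k] k_bounds by auto

lemma m_k_pos: "m k \<ge> 1" using vertex_m_less[of k "Suc k"] k_bounds by auto

lemma vertex_k_coeff_nonzero: "b (n k) (m k) \<noteq> 0" using vertex_coeff_nonzero k_bounds by auto

lemma intercept_eq: "intercept n m k = real (m k) + real (n k) / (l1 + l2)"
proof -
  have "m (Suc k) < m k" "n k < n (Suc k)" using vertex_m_less vertex_n_less k_bounds by auto
  then show ?thesis unfolding intercept_def l1_l2_eq_edge_weight edge_weight_def by (simp add: field_simps)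
qed

lemma intercept_pred_eq: "intercept n m (k - 1) = real (m k) + real (n k) / l1"
proof -
  have k1: "Suc (k - 1) = k" using k_bounds by auto
  have kk: "k - 1 \<in> {1..s}" "k \<in> {1..s}" "k - 1 < k" using k_bounds by auto
  have lt: "m k < m (k - 1)" "n (k - 1) < n k" using vertex_m_less[OF kk] vertex_n_less[OF kk] by auto
  have "intercept n m (k - 1) = real (m (k - 1)) + real (n (k - 1)) * (real (m (k - 1)) - real (m k)) / (real (n k) - real (n (k - 1)))"
    unfolding intercept_def k1 ..
  also have "\<dots> = real (m k) + real (n k) / l1"
    unfolding l1_def using lt by (simp add: field_simps)
  finally show ?thesis .
qed

lemma delta_minus_m_k_pos: "real \<delta> - real (m k) > 0"
proof -
  have "real (n k) / (l1 + l2) > 0" using n_k_pos l1_pos l2_pos by simp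
  then show ?thesis using intercept_eq case4(4) by linarith
qed

lemma alpha_pos: "\<alpha> > 0" unfolding alpha_def using n_k_pos delta_minus_m_k_pos by simp

lemma alpha_eq: "\<alpha> * (real \<delta> - real (m k)) = real (n k)"
  unfolding alpha_def using delta_minus_m_k_pos by simp

lemma alpha_le_l1_l2: "\<alpha> \<le> l1 + l2"
proof -
  have "real (n k) / (l1 + l2) \<le> real \<delta> - real (m k)" using intercept_eq case4(4) by linarith
  then have "real (n k) \<le> (l1 + l2) * (real \<delta> - real (m k))" using l1_pos l2_pos by (simp add: divide_le_eq mult.commute)
  then show ?thesis unfolding alpha_def using delta_minus_m_k_pos by (simp add: divide_le_eq mult.commute)
qed

lemma l1_le_alpha: "l1 \<le> \<alpha>"
proof -
  have "real \<delta> - real (m k) \<le> real (n k) / l1" using intercept_pred_eq case4(5) by linarith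
  then have "l1 * (real \<delta> - real (m k)) \<le> real (n k)" using l1_pos by (simp add: le_divide_eq mult.commute)
  then show ?thesis unfolding alpha_def using delta_minus_m_k_pos by (simp add: le_divide_eq mult.commute)
qed

lemma support_weight_ge_vertex_k: assumes "l1 \<le> l" "l \<le> l1 + l2" "b i j \<noteq> 0"
  shows "real i + l * real j \<ge> real (n k) + l * real (m k)"
  using support_weight_ge[of k l i j] k_bounds assms l1_eq_edge_weight l1_l2_eq_edge_weight by auto

lemma support_alpha_weight_ge: "b i j \<noteq> 0 \<Longrightarrow> real i + \<alpha> * real j \<ge> \<alpha> * real \<delta>"
  using support_weight_ge_vertex_k[OF l1_le_alpha alpha_le_l1_l2] alpha_eq by (simp add: algebra_simps)

lemma support_max_exponents:
  assumes nm1: "(n 1, m 1) \<noteq> (0, \<delta>)" and bij: "b i j \<noteq> 0"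
  shows "(i \<ge> 1 \<and> real i / \<alpha> + real j \<ge> real \<delta>) \<or> (i = 0 \<and> j \<ge> \<delta> + 1)"
proof (cases "i = 0")
  case False
  have "real i + \<alpha> * real j \<ge> \<alpha> * real \<delta>" by (rule support_alpha_weight_ge[OF bij])
  then have "(real i + \<alpha> * real j) / \<alpha> \<ge> \<alpha> * real \<delta> / \<alpha>" using alpha_pos by (intro divide_right_mono) auto
  then have "real i / \<alpha> + real j \<ge> real \<delta>" using alpha_pos by (simp add: add_divide_distrib)
  then show ?thesis using False by auto
next
  case True
  have "real 0 + \<alpha> * real j \<ge> \<alpha> * real \<delta>" using support_alpha_weight_ge[OF bij] True by simp
  then have jd: "j \<ge> \<delta>" using alpha_pos by simp
  have "j \<noteq> \<delta>"
  proof
    assume "j = \<delta>"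
    have "\<alpha> * real j \<le> real (n k) + \<alpha> * real (m k)" using \<open>j = \<delta>\<close> alpha_eq by (simp add: algebra_simps)
    then have "n 1 = 0 \<and> m 1 = j" using support_weight_eq_first_vertex[of k \<alpha> j] k_bounds l1_eq_edge_weight l1_l2_eq_edge_weight l1_le_alpha alpha_le_l1_l2 bij True by auto
    then show False using nm1 \<open>j = \<delta>\<close> by auto
  qed
  then show ?thesis using True jd by auto
qed

lemma p_norm_bounds: "\<exists>\<tau>>0. \<forall>z. cmod z < \<tau> \<longrightarrow>
    cmod a / 2 * cmod z ^ \<delta> \<le> cmod (p z) \<and> cmod (p z) \<le> 2 * cmod a * cmod z ^ \<delta>"
proof -
  obtain C \<epsilon> where \<epsilon>: "\<epsilon> > 0"
    and C: "\<And>z. cmod z < \<epsilon> \<Longrightarrow> cmod (p z - a * z ^ \<delta>) \<le> C * cmod z ^ (\<delta> + 1)"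
    using p_expansion by blast
  define D where "D = \<bar>C\<bar> + 1"
  have D: "D > 0" unfolding D_def by simp
  define \<tau> where "\<tau> = min \<epsilon> (cmod a / (2 * D))"
  have "\<tau> > 0" unfolding \<tau>_def using \<epsilon> a_nz D by simp
  moreover have "cmod a / 2 * cmod z ^ \<delta> \<le> cmod (p z) \<and> cmod (p z) \<le> 2 * cmod a * cmod z ^ \<delta>"
    if z: "cmod z < \<tau>" for z
  proof -
    have "D * cmod z \<le> D * (cmod a / (2 * D))" using z D unfolding \<tau>_def by (intro mult_left_mono) auto
    also have "\<dots> = cmod a / 2" using D by simp
    finally have Dz: "D * cmod z \<le> cmod a / 2" .
    have "cmod (p z - a * z ^ \<delta>) \<le> C * cmod z * cmod z ^ \<delta>"
      using C[of z] z unfolding \<tau>_def by (simp add: mult.assoc)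
    also have "\<dots> \<le> D * cmod z * cmod z ^ \<delta>" unfolding D_def by (intro mult_right_mono) auto
    also have "\<dots> \<le> cmod a / 2 * cmod z ^ \<delta>" using Dz by (rule mult_right_mono) simp
    finally have err: "cmod (p z - a * z ^ \<delta>) \<le> cmod a / 2 * cmod z ^ \<delta>" .
    have "cmod (a * z ^ \<delta>) - cmod (p z) \<le> cmod (p z - a * z ^ \<delta>)"
      using norm_triangle_ineq2[of "a * z ^ \<delta>" "p z"] by (simp add: norm_minus_commute)
    moreover have "cmod (p z) - cmod (a * z ^ \<delta>) \<le> cmod (p z - a * z ^ \<delta>)" by (rule norm_triangle_ineq2)
    moreover have "cmod (a * z ^ \<delta>) = cmod a * cmod z ^ \<delta>" by (simp add: norm_mult norm_power)
    moreover have "cmod a * cmod z ^ \<delta> \<ge> 0" by simp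
    ultimately show ?thesis using err by linarith
  qed
  ultimately show ?thesis by blast
qed

lemma q_series_abs: "\<exists>\<rho>. 0 < \<rho> \<and> \<rho> < 1 \<and> (\<lambda>(i, j). cmod (b i j) * \<rho> ^ (i + j)) summable_on UNIV \<and>
   (\<forall>z w. cmod z \<le> \<rho> \<and> cmod w \<le> \<rho> \<longrightarrow> ((\<lambda>(i, j). b i j * z ^ i * w ^ j) has_sum q z w) UNIV)"
proof -
  obtain \<epsilon> where \<epsilon>: "\<epsilon> > 0" and ser: "\<forall>z w. cmod z < \<epsilon> \<and> cmod w < \<epsilon> \<longrightarrow>
          ((\<lambda>(i, j). b i j * z ^ i * w ^ j) has_sum q z w) UNIV" using q_series_absies by blast
  define \<rho> where "\<rho> = min (\<epsilon> / 2) (1/2)"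
  have \<rho>: "0 < \<rho>" "\<rho> < \<epsilon>" "\<rho> < 1" unfolding \<rho>_def using \<epsilon> by auto
  show ?thesis
    using summable_on_norm_double_power_series[OF ser \<rho>(1,2)] \<rho> ser by (intro exI[of _ \<rho>]) force
qed

lemma q_zero: "q 0 0 = 0"
proof -
  obtain \<rho> where \<rho>: "0 < \<rho>" and hs: "\<forall>z w. cmod z \<le> \<rho> \<and> cmod w \<le> \<rho> \<longrightarrow> ((\<lambda>(i, j). b i j * z ^ i * w ^ j) has_sum q z w) UNIV"
    using q_series_abs by blast
  have h: "((\<lambda>(i, j). b i j * 0 ^ i * 0 ^ j) has_sum q 0 0) UNIV" using hs \<rho> by auto
  have "((\<lambda>(i, j). b i j * (0::complex) ^ i * 0 ^ j) has_sum 0) UNIV"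
  proof (rule has_sum_0)
    fix x :: "nat \<times> nat"
    obtain i j where x: "x = (i, j)" by (cases x)
    show "(\<lambda>(i, j). b i j * (0::complex) ^ i * 0 ^ j) x = 0"
      using b00 unfolding x by (cases "i = 0"; cases "j = 0") auto
  qed
  then show ?thesis using h has_sum_unique by blast
qed

lemma q_norm_le_max_bound:
  assumes nm1: "(n 1, m 1) \<noteq> (0, \<delta>)"
  shows "\<exists>M0 K. 0 < M0 \<and> M0 \<le> 1 \<and> K \<ge> 0 \<and> (\<forall>z w. 0 < max (cmod z powr \<alpha>) (cmod w) \<and> max (cmod z powr \<alpha>) (cmod w) \<le> M0 \<longrightarrow>
      cmod (q z w) \<le> K * (cmod z * max (cmod z powr \<alpha>) (cmod w) powr (real \<delta> - 1/\<alpha>) + max (cmod z powr \<alpha>) (cmod w) powr (real \<delta> + 1)))"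
proof -
  obtain \<rho> where \<rho>: "0 < \<rho>" "\<rho> < 1" and sm: "(\<lambda>(i, j). cmod (b i j) * \<rho> ^ (i + j)) summable_on UNIV"
    and hs: "\<forall>z w. cmod z \<le> \<rho> \<and> cmod w \<le> \<rho> \<longrightarrow> ((\<lambda>(i, j). b i j * z ^ i * w ^ j) has_sum q z w) UNIV"
    using q_series_abs by blast
  define \<sigma> where "\<sigma> = infsum (\<lambda>(i, j). cmod (b i j) * \<rho> ^ (i + j)) UNIV"
  have \<sigma>: "\<sigma> \<ge> 0" unfolding \<sigma>_def by (rule infsum_nonneg) (use \<rho> in auto)
  define \<theta> where "\<theta> = min (1/\<alpha>) 1"
  have \<theta>: "\<theta> > 0" "\<theta> \<le> 1" "\<theta> * \<alpha> \<le> 1" unfolding \<theta>_def using alpha_pos by (auto simp: min_def field_simps)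
  define M0 where "M0 = \<rho> powr (1/\<theta>)"
  have M0p: "M0 > 0" unfolding M0_def using \<rho> by simp
  have M0\<theta>: "M0 powr \<theta> = \<rho>" unfolding M0_def using \<rho> \<theta> by (simp add: powr_powr)
  have M0\<rho>: "M0 \<le> \<rho>"
  proof -
    have "\<rho> powr (1/\<theta>) \<le> \<rho> powr 1" using \<rho> \<theta> by (intro powr_mono') (auto simp: field_simps)
    then show ?thesis unfolding M0_def using \<rho> by simp
  qed
  define K where "K = M0 powr (- (real \<delta> + 1)) * \<sigma>"
  have K: "K \<ge> 0" unfolding K_def using \<sigma> by simp
  have M01: "M0 \<le> 1" using M0\<rho> \<rho> by simp
  have main: "\<forall>z w. 0 < max (cmod z powr \<alpha>) (cmod w) \<and> max (cmod z powr \<alpha>) (cmod w) \<le> M0 \<longrightarrow>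
      cmod (q z w) \<le> K * (cmod z * max (cmod z powr \<alpha>) (cmod w) powr (real \<delta> - 1/\<alpha>) + max (cmod z powr \<alpha>) (cmod w) powr (real \<delta> + 1))"
  proof (intro allI impI)
    fix z w
    define M where "M = max (cmod z powr \<alpha>) (cmod w)"
    assume "0 < max (cmod z powr \<alpha>) (cmod w) \<and> max (cmod z powr \<alpha>) (cmod w) \<le> M0"
    then have Mp: "0 < M" "M \<le> M0" unfolding M_def by auto
    have wr: "cmod w \<le> \<rho>" using Mp M0\<rho> unfolding M_def by simp
    have "cmod z \<le> M powr (1/\<alpha>)" unfolding M_def using alpha_pos by (intro le_root_of_powr_le) auto
    also have "\<dots> \<le> M0 powr (1/\<alpha>)" using Mp alpha_pos by (intro powr_mono2) auto
    also have "\<dots> = \<rho> powr (1 / (\<theta> * \<alpha>))" unfolding M0_def using \<rho> by (simp add: powr_powr)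
    also have "\<dots> \<le> \<rho> powr 1" using \<rho> \<theta> alpha_pos by (intro powr_mono') (auto simp: field_simps)
    finally have zr: "cmod z \<le> \<rho>" using \<rho> by simp
    have F: "((\<lambda>(i, j). b i j * z ^ i * w ^ j) has_sum q z w) UNIV" using hs zr wr by auto
    define P where "P = cmod z * M powr (real \<delta> - 1/\<alpha>) + M powr (real \<delta> + 1)"
    have "cmod (q z w) \<le> (M0 powr (- (real \<delta> + 1)) * P) * \<sigma>"
      unfolding \<sigma>_def
    proof (rule norm_double_series_le[where E = "{}"])
      show "((\<lambda>x. if x \<in> {} then 0 else (\<lambda>(i, j). b i j * z ^ i * w ^ j) x) has_sum q z w) UNIV"
        using F by simp
      show "cmod z ^ i * cmod w ^ j \<le> M0 powr (- (real \<delta> + 1)) * P * \<rho> ^ (i + j)" if "b i j \<noteq> 0" for i j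
        using monomial_le_max_powr[of \<alpha> "cmod z" "cmod w" M M0 i \<delta> j] alpha_pos Mp M0\<rho> \<rho>
          support_max_exponents[OF nm1 that] M0\<theta> unfolding M_def P_def \<theta>_def by (simp add: mult_ac)
    qed (use sm \<rho> Mp in \<open>auto simp: P_def\<close>)
    then show "cmod (q z w) \<le> K * (cmod z * max (cmod z powr \<alpha>) (cmod w) powr (real \<delta> - 1/\<alpha>) + max (cmod z powr \<alpha>) (cmod w) powr (real \<delta> + 1))"
      unfolding K_def P_def M_def by (simp add: mult_ac)
  qed
  show ?thesis using M0p M01 K main by blast
qed

lemma Uset_bounds:
  assumes r: "0 < r" "r < 1" and U: "(\<zeta>, \<omega>) \<in> Uset l1 l2 r"
  shows "cmod \<zeta> > 0" "cmod \<omega> > 0" "cmod \<zeta> < r" "cmod \<omega> < r"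
    "(l1 + l2) * ln (cmod \<zeta>) < l2 * ln r + ln (cmod \<omega>)" "ln (cmod \<omega>) < ln r + l1 * ln (cmod \<zeta>)"
proof -
  note h = U[unfolded Uset_iff_ln[OF r(1) l1_pos l2_pos]]
  show Z: "cmod \<zeta> > 0" and W: "cmod \<omega> > 0" using h by auto
  show u1: "(l1 + l2) * ln (cmod \<zeta>) < l2 * ln r + ln (cmod \<omega>)"
    and u2: "ln (cmod \<omega>) < ln r + l1 * ln (cmod \<zeta>)" using h by auto
  have R: "ln r < 0" using r by simp
  have "l2 * ln (cmod \<zeta>) < l2 * ln r + ln r" using u1 u2 l1_pos by (simp add: algebra_simps)
  then have "l2 * ln (cmod \<zeta>) < l2 * ln r" using R by linarith
  then have X: "ln (cmod \<zeta>) < ln r" using l2_pos by simp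
  then show "cmod \<zeta> < r" using Z r by simp
  have "l1 * ln (cmod \<zeta>) < 0" using X R l1_pos by (simp add: mult_pos_neg)
  then have "ln (cmod \<omega>) < ln r" using u2 by linarith
  then show "cmod \<omega> < r" using W r by simp
qed

lemma q_dominant_term: "\<exists>r1>0. r1 < 1 \<and> (\<forall>r \<zeta> \<omega>. 0 < r \<and> r < r1 \<and> (\<zeta>, \<omega>) \<in> Uset l1 l2 r \<longrightarrow>
    cmod (q \<zeta> \<omega> - b (n k) (m k) * \<zeta> ^ n k * \<omega> ^ m k) \<le> cmod (b (n k) (m k)) / 2 * (cmod \<zeta> ^ n k * cmod \<omega> ^ m k))"
proof -
  obtain \<rho> where \<rho>: "0 < \<rho>" "\<rho> < 1" and sm: "(\<lambda>(i, j). cmod (b i j) * \<rho> ^ (i + j)) summable_on UNIV"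
    and hs: "\<forall>z w. cmod z \<le> \<rho> \<and> cmod w \<le> \<rho> \<longrightarrow> ((\<lambda>(i, j). b i j * z ^ i * w ^ j) has_sum q z w) UNIV"
    using q_series_abs by blast
  define \<sigma> where "\<sigma> = infsum (\<lambda>(i, j). cmod (b i j) * \<rho> ^ (i + j)) UNIV"
  have \<sigma>: "\<sigma> \<ge> 0" unfolding \<sigma>_def by (rule infsum_nonneg) (use \<rho> in auto)
  define \<gamma> where "\<gamma> = n k"
  define d where "d = m k"
  define b0 where "b0 = b \<gamma> d"
  have b0: "cmod b0 > 0" unfolding b0_def \<gamma>_def d_def using vertex_k_coeff_nonzero by simp
  define \<kappa>0 where "\<kappa>0 = min 1 l2"
  define c where "c = \<kappa>0 / (\<kappa>0 + (real \<gamma> + (l1 + 1) * real d))"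
  have \<kappa>0: "\<kappa>0 > 0" unfolding \<kappa>0_def using l2_pos by simp
  have "(l1 + 1) * real d \<ge> 0" using l1_pos by simp
  then have c: "c > 0" unfolding c_def using \<kappa>0 by (intro divide_pos_pos) auto
  define S where "S = \<sigma> + 1"
  have S: "S > 0" "\<sigma> \<le> S" unfolding S_def using \<sigma> by simp_all
  define B where "B = cmod b0 / 2 / S"
  have B: "B > 0" "B * S = cmod b0 / 2" unfolding B_def using b0 S by simp_all
  define r1 where "r1 = min (1/2) (min \<rho> (min (\<rho> powr (1 / (c / 2))) (B powr (1 / (\<kappa>0 / 2)))))"
  have r1: "r1 > 0" "r1 < 1" unfolding r1_def using \<rho> B by auto
  have main: "cmod (q \<zeta> \<omega> - b0 * \<zeta> ^ \<gamma> * \<omega> ^ d) \<le> cmod b0 / 2 * (cmod \<zeta> ^ \<gamma> * cmod \<omega> ^ d)"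
    if r: "0 < r" "r < r1" and U: "(\<zeta>, \<omega>) \<in> Uset l1 l2 r" for r \<zeta> \<omega>
  proof -
    have r01: "r < 1" using r r1 by simp
    note ub = Uset_bounds[OF r(1) r01 U]
    have rr: "r \<le> \<rho>" "r \<le> \<rho> powr (1 / (c / 2))" "r \<le> B powr (1 / (\<kappa>0 / 2))" using r unfolding r1_def by auto
    have rc: "r powr (c / 2) \<le> \<rho>" by (rule powr_le_of_le_root[OF r(1) rr(2)]) (use c \<rho> in auto)
    have r\<kappa>: "r powr (\<kappa>0 / 2) \<le> B" by (rule powr_le_of_le_root[OF r(1) rr(3)]) (use \<kappa>0 B in auto)
    have F: "((\<lambda>(i, j). b i j * \<zeta> ^ i * \<omega> ^ j) has_sum q \<zeta> \<omega>) UNIV" using hs ub(3,4) rr(1) by auto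
    from has_sum_remove_point[OF F, of "(\<gamma>, d)"]
    have F': "((\<lambda>x. if x = (\<gamma>, d) then 0 else (\<lambda>(i, j). b i j * \<zeta> ^ i * \<omega> ^ j) x) has_sum (q \<zeta> \<omega> - b0 * \<zeta> ^ \<gamma> * \<omega> ^ d)) UNIV"
      unfolding b0_def by simp
    define W where "W = cmod \<zeta> ^ \<gamma> * cmod \<omega> ^ d * r powr (\<kappa>0 / 2)"
    have "cmod (q \<zeta> \<omega> - b0 * \<zeta> ^ \<gamma> * \<omega> ^ d) \<le> W * \<sigma>"
      unfolding \<sigma>_def
    proof (rule norm_double_series_le[where E = "{(\<gamma>, d)}"])
      show "((\<lambda>x. if x \<in> {(\<gamma>, d)} then 0 else (\<lambda>(i, j). b i j * \<zeta> ^ i * \<omega> ^ j) x)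
          has_sum (q \<zeta> \<omega> - b0 * \<zeta> ^ \<gamma> * \<omega> ^ d)) UNIV"
        using F' by simp
      show "cmod \<zeta> ^ i * cmod \<omega> ^ j \<le> W * \<rho> ^ (i + j)" if bij: "b i j \<noteq> 0" and ne: "(i, j) \<notin> {(\<gamma>, d)}" for i j
      proof -
        have NP1: "real i + l1 * real j \<ge> real \<gamma> + l1 * real d"
          unfolding \<gamma>_def d_def by (rule support_weight_ge_vertex_k[OF _ _ bij]) (use l2_pos in auto)
        have NP2: "real i + (l1 + l2) * real j \<ge> real \<gamma> + (l1 + l2) * real d"
          unfolding \<gamma>_def d_def by (rule support_weight_ge_vertex_k[OF _ _ bij]) (use l2_pos in auto)
        have "cmod \<zeta> ^ i * cmod \<omega> ^ j \<le> cmod \<zeta> ^ \<gamma> * cmod \<omega> ^ d * r powr (\<kappa>0 / 2) * (r powr (c / 2)) ^ (i + j)"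
          unfolding \<kappa>0_def c_def using ne
          by (intro monomial_gap[OF ub(1) ub(2) r(1) r01 _ l1_pos l2_pos ub(5) ub(6) NP1 NP2]) (use ub in auto)
        also have "\<dots> \<le> cmod \<zeta> ^ \<gamma> * cmod \<omega> ^ d * r powr (\<kappa>0 / 2) * \<rho> ^ (i + j)"
          using rc by (intro mult_left_mono power_mono) auto
        finally show ?thesis unfolding W_def .
      qed
    qed (use sm \<rho> in \<open>auto simp: W_def\<close>)
    also have "W * \<sigma> \<le> cmod \<zeta> ^ \<gamma> * cmod \<omega> ^ d * (cmod b0 / 2)"
    proof -
      have "r powr (\<kappa>0 / 2) * \<sigma> \<le> B * S" using r\<kappa> S \<sigma> B by (intro mult_mono) auto
      then show ?thesis unfolding W_def B(2) by (simp add: mult_left_mono mult.assoc)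
    qed
    finally show ?thesis by (simp add: mult_ac)
  qed
  show ?thesis using r1 main unfolding b0_def \<gamma>_def d_def by blast
qed

lemma edge_margins_nonneg:
  "0 \<le> (l1 + l2) * (real \<delta> - real (m k)) - real (n k)" "0 \<le> real (n k) - l1 * (real \<delta> - real (m k))"
proof -
  have "\<alpha> * (real \<delta> - real (m k)) \<le> (l1 + l2) * (real \<delta> - real (m k))"
    using alpha_le_l1_l2 delta_minus_m_k_pos by (intro mult_right_mono) auto
  then show "0 \<le> (l1 + l2) * (real \<delta> - real (m k)) - real (n k)" using alpha_eq by simp
  have "l1 * (real \<delta> - real (m k)) \<le> \<alpha> * (real \<delta> - real (m k))"
    using l1_le_alpha delta_minus_m_k_pos by (intro mult_right_mono) auto
  then show "0 \<le> real (n k) - l1 * (real \<delta> - real (m k))" using alpha_eq by simp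
qed

text \<open>This is where the hypothesis \<open>d \<ge> 2\<close> or \<open>T\<^sub>k < \<delta> < T\<^sub>k\<^sub>-\<^sub>1\<close> enters: it makes both
  defining inequalities of \<open>U\<close> improve by a definite power of \<open>r\<close> under \<open>f\<close>.\<close>

lemma edge_margins_pos:
  assumes hyp: "m k \<ge> 2 \<or> (intercept n m k < real \<delta> \<and> real \<delta> < intercept n m (k - 1))"
  shows "0 < (l1 + l2) * (real \<delta> - real (m k)) - real (n k) + (real (m k) - 1) * l2 \<and>
    0 < real (n k) - l1 * (real \<delta> - real (m k)) + (real (m k) - 1)"
proof (cases "m k \<ge> 2")
  case True
  then have "real (m k) - 1 \<ge> 1" by simp
  moreover have "(real (m k) - 1) * l2 \<ge> 1 * l2" using calculation l2_pos by (intro mult_right_mono) auto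
  ultimately show ?thesis using edge_margins_nonneg l2_pos by linarith
next
  case False
  then have T: "intercept n m k < real \<delta>" "real \<delta> < intercept n m (k - 1)" using hyp by auto
  have "real (n k) / (l1 + l2) < real \<delta> - real (m k)" using T(1) intercept_eq by simp
  then have "real (n k) < (l1 + l2) * (real \<delta> - real (m k))"
    using l1_pos l2_pos by (simp add: divide_less_eq mult.commute)
  moreover have "(real (m k) - 1) * l2 \<ge> 0" using m_k_pos l2_pos by simp
  moreover have "real \<delta> - real (m k) < real (n k) / l1" using T(2) intercept_pred_eq by simp
  then have "l1 * (real \<delta> - real (m k)) < real (n k)" using l1_pos by (simp add: less_divide_eq mult.commute)
  ultimately show ?thesis using m_k_pos by simp
qed

lemma Uset_step_estimates:
  "\<exists>r0>0. r0 < 1 \<and> (\<forall>r \<zeta> \<omega>. 0 < r \<and> r < r0 \<and> (\<zeta>, \<omega>) \<in> Uset l1 l2 r \<longrightarrow>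
     cmod a / 2 * cmod \<zeta> ^ \<delta> \<le> cmod (p \<zeta>) \<and> cmod (p \<zeta>) \<le> 2 * cmod a * cmod \<zeta> ^ \<delta> \<and>
     cmod (b (n k) (m k)) / 2 * (cmod \<zeta> ^ n k * cmod \<omega> ^ m k) \<le> cmod (q \<zeta> \<omega>) \<and>
     cmod (q \<zeta> \<omega>) \<le> 3 * cmod (b (n k) (m k)) / 2 * (cmod \<zeta> ^ n k * cmod \<omega> ^ m k))"
proof -
  obtain \<tau> where \<tau>: "\<tau> > 0" and p_bound: "\<And>z. cmod z < \<tau> \<Longrightarrow>
    cmod a / 2 * cmod z ^ \<delta> \<le> cmod (p z) \<and> cmod (p z) \<le> 2 * cmod a * cmod z ^ \<delta>"
    using p_norm_bounds by blast
  obtain r1 where r1: "r1 > 0" "r1 < 1" and q_bound: "\<And>r \<zeta> \<omega>. 0 < r \<Longrightarrow> r < r1 \<Longrightarrow> (\<zeta>, \<omega>) \<in> Uset l1 l2 r \<Longrightarrow>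
    cmod (q \<zeta> \<omega> - b (n k) (m k) * \<zeta> ^ n k * \<omega> ^ m k) \<le> cmod (b (n k) (m k)) / 2 * (cmod \<zeta> ^ n k * cmod \<omega> ^ m k)"
    using q_dominant_term by blast
  have "cmod a / 2 * cmod \<zeta> ^ \<delta> \<le> cmod (p \<zeta>) \<and> cmod (p \<zeta>) \<le> 2 * cmod a * cmod \<zeta> ^ \<delta> \<and>
     cmod (b (n k) (m k)) / 2 * (cmod \<zeta> ^ n k * cmod \<omega> ^ m k) \<le> cmod (q \<zeta> \<omega>) \<and>
     cmod (q \<zeta> \<omega>) \<le> 3 * cmod (b (n k) (m k)) / 2 * (cmod \<zeta> ^ n k * cmod \<omega> ^ m k)"
    if r: "0 < r" "r < min r1 \<tau>" and U: "(\<zeta>, \<omega>) \<in> Uset l1 l2 r" for r \<zeta> \<omega>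
  proof -
    define v where "v = b (n k) (m k) * \<zeta> ^ n k * \<omega> ^ m k"
    have "cmod \<zeta> < r" using Uset_bounds[OF r(1) _ U] r r1 by simp
    then have "cmod a / 2 * cmod \<zeta> ^ \<delta> \<le> cmod (p \<zeta>) \<and> cmod (p \<zeta>) \<le> 2 * cmod a * cmod \<zeta> ^ \<delta>"
      using p_bound r by simp
    moreover have "cmod (q \<zeta> \<omega> - v) \<le> cmod (b (n k) (m k)) / 2 * (cmod \<zeta> ^ n k * cmod \<omega> ^ m k)"
      using q_bound[OF r(1) _ U] r unfolding v_def by simp
    moreover have "cmod v = cmod (b (n k) (m k)) * (cmod \<zeta> ^ n k * cmod \<omega> ^ m k)"
      unfolding v_def by (simp add: norm_mult norm_power)
    moreover have "cmod v - cmod (q \<zeta> \<omega>) \<le> cmod (q \<zeta> \<omega> - v)"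
      using norm_triangle_ineq2[of v "q \<zeta> \<omega>"] by (simp add: norm_minus_commute)
    moreover have "cmod (q \<zeta> \<omega>) - cmod v \<le> cmod (q \<zeta> \<omega> - v)" by (rule norm_triangle_ineq2)
    ultimately show ?thesis by linarith
  qed
  then show ?thesis using r1 \<tau> by (intro exI[of _ "min r1 \<tau>"]) auto
qed

lemma Uset_forward_invariant:
  assumes hyp: "m k \<ge> 2 \<or> (intercept n m k < real \<delta> \<and> real \<delta> < intercept n m (k - 1))"
  shows "\<exists>r0>0. \<forall>r \<zeta> \<omega>. 0 < r \<and> r < r0 \<and> (\<zeta>, \<omega>) \<in> Uset l1 l2 r \<longrightarrow> (p \<zeta>, q \<zeta> \<omega>) \<in> Uset l1 l2 r"
proof -
  obtain r1 where r1: "r1 > 0" "r1 < 1" and estimates: "\<And>r \<zeta> \<omega>. 0 < r \<Longrightarrow> r < r1 \<Longrightarrow> (\<zeta>, \<omega>) \<in> Uset l1 l2 r \<Longrightarrow>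
     cmod a / 2 * cmod \<zeta> ^ \<delta> \<le> cmod (p \<zeta>) \<and> cmod (p \<zeta>) \<le> 2 * cmod a * cmod \<zeta> ^ \<delta> \<and>
     cmod (b (n k) (m k)) / 2 * (cmod \<zeta> ^ n k * cmod \<omega> ^ m k) \<le> cmod (q \<zeta> \<omega>) \<and>
     cmod (q \<zeta> \<omega>) \<le> 3 * cmod (b (n k) (m k)) / 2 * (cmod \<zeta> ^ n k * cmod \<omega> ^ m k)"
    using Uset_step_estimates by blast
  define K1 where "K1 = \<bar>ln (cmod a / 2)\<bar> + \<bar>ln (2 * cmod a)\<bar>"
  define K2 where "K2 = \<bar>ln (cmod (b (n k) (m k)) / 2)\<bar> + \<bar>ln (3 * cmod (b (n k) (m k)) / 2)\<bar>"
  define EA where "EA = (l1 + l2) * (real \<delta> - real (m k)) - real (n k) + (real (m k) - 1) * l2"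
  define EB where "EB = real (n k) - l1 * (real \<delta> - real (m k)) + (real (m k) - 1)"
  have E: "EA > 0" "EB > 0" using edge_margins_pos[OF hyp] unfolding EA_def EB_def by auto
  define r0 where "r0 = min r1 (min (exp (- ((l1 + l2) * K1 + K2) / EA)) (exp (- (l1 * K1 + K2) / EB)))"
  have "(p \<zeta>, q \<zeta> \<omega>) \<in> Uset l1 l2 r" if r: "0 < r" "r < r0" and U: "(\<zeta>, \<omega>) \<in> Uset l1 l2 r" for r \<zeta> \<omega>
  proof -
    have "r < r1" using r unfolding r0_def by simp
    note U_ln = Uset_bounds[OF r(1) _ U] and bounds = estimates[OF r(1) this U]
    have r_less_1: "r < 1" using \<open>r < r1\<close> r1 by simp
    note U_ln = U_ln[OF r_less_1]
    have "cmod a / 2 * cmod \<zeta> ^ \<delta> > 0" "cmod (b (n k) (m k)) / 2 * (cmod \<zeta> ^ n k * cmod \<omega> ^ m k) > 0"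
      using a_nz vertex_k_coeff_nonzero U_ln(1,2) by simp_all
    then have pos: "cmod (p \<zeta>) > 0" "cmod (q \<zeta> \<omega>) > 0" using bounds by linarith+
    have X1: "\<bar>ln (cmod (p \<zeta>)) - real \<delta> * ln (cmod \<zeta>)\<bar> \<le> K1"
      using abs_ln_sub_le_of_power_bounds[of "cmod \<zeta>" "cmod a / 2" \<delta> "cmod (p \<zeta>)" "2 * cmod a"]
        bounds U_ln a_nz unfolding K1_def by simp
    have "\<bar>ln (cmod (q \<zeta> \<omega>)) - real 1 * ln (cmod \<zeta> ^ n k * cmod \<omega> ^ m k)\<bar> \<le> K2"
      using abs_ln_sub_le_of_power_bounds[of "cmod \<zeta> ^ n k * cmod \<omega> ^ m k" "cmod (b (n k) (m k)) / 2" 1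
          "cmod (q \<zeta> \<omega>)" "3 * cmod (b (n k) (m k)) / 2"]
        bounds U_ln vertex_k_coeff_nonzero unfolding K2_def by simp
    then have Y1: "\<bar>ln (cmod (q \<zeta> \<omega>)) - (real (n k) * ln (cmod \<zeta>) + real (m k) * ln (cmod \<omega>))\<bar> \<le> K2"
      using U_ln by (simp add: ln_mult ln_realpow)
    have "EA * ln r \<le> - ((l1 + l2) * K1 + K2)"
      using r E(1) unfolding r0_def by (intro mult_ln_le_of_le_exp) auto
    moreover have "EB * ln r \<le> - (l1 * K1 + K2)"
      using r E(2) unfolding r0_def by (intro mult_ln_le_of_le_exp) auto
    moreover have "ln (cmod \<zeta>) < ln r" using U_ln(1,3) r(1) by simp
    moreover have "1 \<le> real (m k)" using m_k_pos by simp
    ultimately have "(l1 + l2) * ln (cmod (p \<zeta>)) < l2 * ln r + ln (cmod (q \<zeta> \<omega>)) \<and>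
        ln (cmod (q \<zeta> \<omega>)) < ln r + l1 * ln (cmod (p \<zeta>))"
      using ln_Uset_step[OF _ U_ln(5,6) _ l1_pos l2_pos edge_margins_nonneg X1 Y1] unfolding EA_def EB_def
      by blast
    then show ?thesis using pos by (simp add: Uset_iff_ln[OF r(1) l1_pos l2_pos])
  qed
  moreover have "r0 > 0" using r1 unfolding r0_def by simp
  ultimately show ?thesis by blast
qed

lemma green_limits_on_Af:
  "\<exists>r0>0. \<forall>r. 0 < r \<and> r < r0 \<longrightarrow>
     (m k \<ge> 2 \<or> (intercept n m k < real \<delta> \<and> real \<delta> < intercept n m (k - 1))) \<longrightarrow>
     (\<forall>(z, w) \<in> Af Dz (skew p q) (Uset l1 l2 r).
        \<exists>g. green_seq \<delta> (\<lambda>j. cmod ((p ^^ j) z)) \<longlonglongrightarrow> g \<and>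
            green_seq \<delta> (\<lambda>j. cmod (snd ((skew p q ^^ j) (z, w)))) \<longlonglongrightarrow> ereal \<alpha> * g)"
proof (cases "m k \<ge> 2 \<or> (intercept n m k < real \<delta> \<and> real \<delta> < intercept n m (k - 1))")
  case False
  then show ?thesis by (intro exI[of _ 1]) auto
next
  case True
  obtain r0 where r0: "r0 > 0" and invariant: "\<And>r \<zeta> \<omega>. 0 < r \<Longrightarrow> r < r0 \<Longrightarrow>
      (\<zeta>, \<omega>) \<in> Uset l1 l2 r \<Longrightarrow> (p \<zeta>, q \<zeta> \<omega>) \<in> Uset l1 l2 r"
    using Uset_forward_invariant[OF True] by blast
  obtain r1 where r1: "r1 > 0" "r1 < 1" and estimates: "\<And>r \<zeta> \<omega>. 0 < r \<Longrightarrow> r < r1 \<Longrightarrow> (\<zeta>, \<omega>) \<in> Uset l1 l2 r \<Longrightarrow>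
     cmod a / 2 * cmod \<zeta> ^ \<delta> \<le> cmod (p \<zeta>) \<and> cmod (p \<zeta>) \<le> 2 * cmod a * cmod \<zeta> ^ \<delta> \<and>
     cmod (b (n k) (m k)) / 2 * (cmod \<zeta> ^ n k * cmod \<omega> ^ m k) \<le> cmod (q \<zeta> \<omega>) \<and>
     cmod (q \<zeta> \<omega>) \<le> 3 * cmod (b (n k) (m k)) / 2 * (cmod \<zeta> ^ n k * cmod \<omega> ^ m k)"
    using Uset_step_estimates by blast
  have green: "\<exists>g. green_seq \<delta> (\<lambda>j. cmod ((p ^^ j) z)) \<longlonglongrightarrow> g \<and>
      green_seq \<delta> (\<lambda>j. cmod (snd ((skew p q ^^ j) (z, w)))) \<longlonglongrightarrow> ereal \<alpha> * g"
    if r: "0 < r" "r < min r0 r1" and zw: "(z, w) \<in> Af Dz (skew p q) (Uset l1 l2 r)" for r z w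
  proof -
    from zw obtain N where N: "(skew p q ^^ N) (z, w) \<in> Uset l1 l2 r" unfolding Af_def by blast
    define orb where "orb j = (skew p q ^^ (j + N)) (z, w)" for j
    have orb_Suc: "orb (Suc j) = (p (fst (orb j)), q (fst (orb j)) (snd (orb j)))" for j
      unfolding orb_def using skew_iterate_fst_Suc skew_iterate_snd_Suc
      by (metis add_Suc prod.collapse)
    have orb_U: "orb j \<in> Uset l1 l2 r" for j
    proof (induction j)
      case 0
      then show ?case using N unfolding orb_def by simp
    next
      case (Suc j)
      then show ?case using invariant[of r "fst (orb j)" "snd (orb j)"] r orb_Suc[of j] by simp
    qed
    define Zs where "Zs j = cmod (fst (orb j))" for j
    define Ws where "Ws j = cmod (snd (orb j))" for j
    have bounds: "cmod a / 2 * Zs j ^ \<delta> \<le> Zs (Suc j) \<and> Zs (Suc j) \<le> 2 * cmod a * Zs j ^ \<delta> \<and>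
       cmod (b (n k) (m k)) / 2 * (Zs j ^ n k * Ws j ^ m k) \<le> Ws (Suc j) \<and>
       Ws (Suc j) \<le> 3 * cmod (b (n k) (m k)) / 2 * (Zs j ^ n k * Ws j ^ m k)" for j
      using estimates[of r "fst (orb j)" "snd (orb j)"] r orb_U[of j] orb_Suc[of j] unfolding Zs_def Ws_def by simp
    have pos: "Zs j > 0" "Ws j > 0" for j
      using Uset_bounds[of r "fst (orb j)" "snd (orb j)"] r r1 orb_U[of j] unfolding Zs_def Ws_def by auto
    have "m k < \<delta>" using delta_minus_m_k_pos by simp
    then obtain g where "green_seq \<delta> Zs \<longlonglongrightarrow> ereal g" and "green_seq \<delta> Ws \<longlonglongrightarrow> ereal (\<alpha> * g)"
      using green_limits_monomial_recurrence[of Zs Ws "cmod a / 2" "cmod (b (n k) (m k)) / 2" \<delta> "2 * cmod a"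
          "n k" "m k" "3 * cmod (b (n k) (m k)) / 2", OF pos(1) pos(2) _ _ _ _ _ _ _ delta_ge]
        bounds a_nz vertex_k_coeff_nonzero unfolding alpha_def by auto
    moreover have "Zs = (\<lambda>j. cmod ((p ^^ (j + N)) z))" "Ws = (\<lambda>j. cmod (snd ((skew p q ^^ (j + N)) (z, w))))"
      unfolding Zs_def Ws_def orb_def using skew_iterate_fst by (auto simp: fun_eq_iff)
    ultimately show ?thesis using delta_ge
      by (intro green_seq_shift_pair[of \<delta> _ N "ereal g"]) auto
  qed
  show ?thesis using r0 r1 green by (intro exI[of _ "min r0 r1"]) auto
qed

lemma green_limits_on_basin0:
  assumes nm1: "(n 1, m 1) \<noteq> (0, \<delta>)" and x: "x \<in> basin0 Dz (skew p q)"
  shows "\<exists>g. green_seq \<delta> (\<lambda>j. cmod ((p ^^ j) (fst x))) \<longlonglongrightarrow> g \<and>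
      green_seq \<delta> (\<lambda>j. max (cmod (fst ((skew p q ^^ j) x)) powr \<alpha>) (cmod (snd ((skew p q ^^ j) x))))
        \<longlonglongrightarrow> ereal \<alpha> * g"
proof -
  obtain M0 K where M0: "0 < M0" "M0 \<le> 1" and K: "K \<ge> 0" and q_bound: "\<And>z w. 0 < max (cmod z powr \<alpha>) (cmod w) \<Longrightarrow>
      max (cmod z powr \<alpha>) (cmod w) \<le> M0 \<Longrightarrow> cmod (q z w) \<le>
      K * (cmod z * max (cmod z powr \<alpha>) (cmod w) powr (real \<delta> - 1/\<alpha>) + max (cmod z powr \<alpha>) (cmod w) powr (real \<delta> + 1))"
    using q_norm_le_max_bound[OF nm1] by blast
  obtain \<tau> where \<tau>: "\<tau> > 0" and p_bound: "\<And>z. cmod z < \<tau> \<Longrightarrow>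
    cmod a / 2 * cmod z ^ \<delta> \<le> cmod (p z) \<and> cmod (p z) \<le> 2 * cmod a * cmod z ^ \<delta>"
    using p_norm_bounds by blast
  define c2 where "c2 = 2 * cmod a"
  define bd where "bd = min M0 (exp (- ln (2 * K + c2 powr \<alpha> + 1) - 1))"
  have bd: "bd > 0" using M0 unfolding bd_def by simp
  obtain N where N: "\<And>j. j \<ge> N \<Longrightarrow> cmod (fst ((skew p q ^^ j) x)) < \<tau> \<and>
      max (cmod (fst ((skew p q ^^ j) x)) powr \<alpha>) (cmod (snd ((skew p q ^^ j) x))) < bd"
    using basin0_eventually_small[OF x alpha_pos \<tau> bd] by blast
  define z where "z j = fst ((skew p q ^^ (j + N)) x)" for j
  define w where "w j = snd ((skew p q ^^ (j + N)) x)" for j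
  have z_Suc: "z (Suc j) = p (z j)" and w_Suc: "w (Suc j) = q (z j) (w j)" for j
    unfolding z_def w_def using skew_iterate_fst_Suc skew_iterate_snd_Suc by simp_all
  have small: "cmod (z j) < \<tau>" "max (cmod (z j) powr \<alpha>) (cmod (w j)) < bd" for j
    using N[of "j + N"] unfolding z_def w_def by auto
  obtain G where "green_seq \<delta> (\<lambda>j. cmod (z j)) \<longlonglongrightarrow> G"
    and "green_seq \<delta> (\<lambda>j. max (cmod (z j) powr \<alpha>) (cmod (w j))) \<longlonglongrightarrow> ereal \<alpha> * G"
  proof (atomize_elim, rule green_limits_max_orbit)
    show "cmod a / 2 > 0" "c2 > 0" using a_nz unfolding c2_def by simp_all
    show "cmod a / 2 * cmod (z j) ^ \<delta> \<le> cmod (z (Suc j))" "cmod (z (Suc j)) \<le> c2 * cmod (z j) ^ \<delta>" for j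
      using p_bound[OF small(1)[of j]] z_Suc[of j] unfolding c2_def by auto
    show "cmod (w (Suc j)) \<le> K * (cmod (z j) * max (cmod (z j) powr \<alpha>) (cmod (w j)) powr (real \<delta> - 1/\<alpha>)
        + max (cmod (z j) powr \<alpha>) (cmod (w j)) powr (real \<delta> + 1))"
      if "0 < max (cmod (z j) powr \<alpha>) (cmod (w j))" for j
      using q_bound[OF that] small(2)[of j] w_Suc[of j] unfolding bd_def by simp
    show "cmod (w (Suc j)) = 0" if "max (cmod (z j) powr \<alpha>) (cmod (w j)) = 0" for j
      using that w_Suc[of j] q_zero by (simp add: max_def split: if_splits)
    show "max (cmod (z j) powr \<alpha>) (cmod (w j)) \<le> 1" for j using small(2)[of j] M0 unfolding bd_def by simp
    show "max (cmod (z 0) powr \<alpha>) (cmod (w 0)) \<le> exp (- ln (2 * K + c2 powr \<alpha> + 1) - 1)"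
      using small(2)[of 0] unfolding bd_def by simp
  qed (use K alpha_pos delta_ge in auto)
  moreover have "(\<lambda>j. cmod (z j)) = (\<lambda>j. cmod ((p ^^ (j + N)) (fst x)))"
    unfolding z_def using skew_iterate_fst by simp
  ultimately show ?thesis using delta_ge
    by (intro green_seq_shift_pair[of \<delta> _ N G]) (auto simp: z_def w_def)
qed

end

theorem theorem2p19:
  fixes p :: "complex \<Rightarrow> complex" and q :: "complex \<Rightarrow> complex \<Rightarrow> complex"
    and Dz :: "complex set" and a :: complex and \<delta> :: nat
    and b :: "nat \<Rightarrow> nat \<Rightarrow> complex"
    and s k :: nat and n m :: "nat \<Rightarrow> nat"
    and \<alpha> l1 l2 :: real
  assumes dom: "Dz = UNIV \<or> (\<exists>R>0. Dz = ball 0 R \<and> closure (basin_p Dz p) \<subseteq> ball 0 R)"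
    and p_hol: "p holomorphic_on Dz"
    and a_nz: "a \<noteq> 0" and delta_ge: "\<delta> \<ge> 2"
    and p_expansion: "\<exists>C \<epsilon>. \<epsilon> > 0 \<and>
          (\<forall>z. cmod z < \<epsilon> \<longrightarrow> cmod (p z - a * z ^ \<delta>) \<le> C * cmod z ^ (\<delta> + 1))"
    and q_cont: "continuous_on (Dz \<times> UNIV) (\<lambda>(z, w). q z w)"
    and q_hol_z: "\<forall>w. (\<lambda>z. q z w) holomorphic_on Dz"
    and q_hol_w: "\<forall>z\<in>Dz. q z holomorphic_on UNIV"
    and q_series: "\<exists>\<epsilon>>0. \<forall>z w. cmod z < \<epsilon> \<and> cmod w < \<epsilon> \<longrightarrow>
          ((\<lambda>(i, j). b i j * z ^ i * w ^ j) has_sum q z w) UNIV"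
    and b00: "b 0 0 = 0" and b01: "b 0 1 = 0"
    and vertices: "{(real (n i), real (m i)) | i. i \<in> {1..s}}
                     = {x. x extreme_point_of newton_polygon b}"
    and n_incr: "strict_mono_on {1..s} n"
    and m_decr: "\<forall>i\<in>{1..s}. \<forall>j\<in>{1..s}. i < j \<longrightarrow> m j < m i"
    and case4: "s > 2" "2 \<le> k" "k \<le> s - 1"
       "intercept n m k \<le> real \<delta>" "real \<delta> \<le> intercept n m (k - 1)"
    and alpha_def: "\<alpha> = real (n k) / (real \<delta> - real (m k))"
    and l1_def: "l1 = (real (n k) - real (n (k - 1))) / (real (m (k - 1)) - real (m k))"
    and l12_def: "l1 + l2 = (real (n (k + 1)) - real (n k)) / (real (m k) - real (m (k + 1)))"
  shows "(\<exists>r0>0. \<forall>r. 0 < r \<and> r < r0 \<longrightarrow>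
            ((m k \<ge> 2 \<or> (intercept n m k < real \<delta> \<and> real \<delta> < intercept n m (k - 1))) \<longrightarrow>
             (\<forall>(z, w) \<in> Af Dz (skew p q) (Uset l1 l2 r).
                \<exists>g. green_seq \<delta> (\<lambda>j. cmod ((p ^^ j) z)) \<longlonglongrightarrow> g \<and>
                    green_seq \<delta> (\<lambda>j. cmod (snd ((skew p q ^^ j) (z, w)))) \<longlonglongrightarrow> ereal \<alpha> * g)))
       \<and> ((n 1, m 1) \<noteq> (0, \<delta>) \<longrightarrow>
            (\<forall>x \<in> basin0 Dz (skew p q).
                \<exists>g. green_seq \<delta> (\<lambda>j. cmod ((p ^^ j) (fst x))) \<longlonglongrightarrow> g \<and>
                    green_seq \<delta> (\<lambda>j. max (cmod (fst ((skew p q ^^ j) x)) powr \<alpha>)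
                                          (cmod (snd ((skew p q ^^ j) x)))) \<longlonglongrightarrow> ereal \<alpha> * g))"
proof -
  interpret skew_case4 b s n m p q a \<delta> k \<alpha> l1 l2
    by unfold_locales
      (use vertices n_incr m_decr a_nz delta_ge p_expansion q_series b00 case4 alpha_def l1_def l12_def in auto)
  show ?thesis
    using green_limits_on_Af[of Dz] green_limits_on_basin0 by blast
qed

end
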